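(* Let $M$ be a finite-dimensional graded pointed Majid algebra over $\mathbbm{k}$, generated by a finite abelian group $G$ (its group of group-like elements, so $M(0)=\mathbbm{k}G$) and a set of skew-primitive elements, and let $\Phi$ be the normalized 3-cocycle on $G$ obtained by restricting the associator of $M$ to $G$. Let $\pi:M\to \mathbbm{k}G$ be the projection onto $M(0)$. For $g\in G$ put $$R_g=\{m\in M \mid (\pi\otimes \mathrm{id})\Delta(m)=g\otimes m,\ (\mathrm{id}\otimes\pi)\Delta(m)=m\otimes 1\},$$ so that $R:=\{m\in M\mid (\mathrm{id}\otimes \pi)\Delta(m)=m\otimes 1\}=\bigoplus_{g\in G}R_g$. For $f\in G$ and $X\in R_g$ define $$f\triangleright X=\frac{\Phi(fg,f^{-1},f)}{\Phi(f,f^{-1},f)}\,(f\cdot X)\cdot f^{-1},$$ where $\cdot$ is the multiplication of $M$. Then $f\triangleright X\in R_g$, and for all $e,f\in G$, $X\in R_g$, $$e\triangleright(f\triangleright X)=\widetilde{\Phi}_g(e,f)\,(ef)\triangleright X,\qquad \widetilde{\Phi}_g(e,f)=\frac{\Phi(g,e,f)\Phi(e,f,g)}{\Phi(e,g,f)}.$$ Consequently $R$, with the $G$-grading $R=\bigoplus_g R_g$ and this action, is an object of the category ${}^{\mathbbm{k}G}_{\mathbbm{k}G}\mathcal{YD}^{\Phi}$.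
   Context: $\mathbbm{k}$ is an algebraically closed field of characteristic $0$. A Majid algebra (coquasi-Hopf algebra) is a coassociative counital coalgebra $(M,\Delta,\varepsilon)$ with a unital, not necessarily associative, multiplication which is a coalgebra map, a convolution-invertible linear form $\Phi:M^{\otimes 3}\to\mathbbm{k}$ (the associator) satisfying $a_1(b_1c_1)\Phi(a_2,b_2,c_2)=\Phi(a_1,b_1,c_1)(a_2b_2)c_2$ together with the usual 3-cocycle and normalization conditions, and a quasi-antipode $(S,\alpha,\beta)$ with $S(a_1)\alpha(a_2)a_3=\alpha(a)1$, $a_1\beta(a_2)S(a_3)=\beta(a)1$, $\Phi(a_1,S(a_3),a_5)\beta(a_2)\alpha(a_4)=\varepsilon(a)=\Phi^{-1}(S(a_1),a_3,S(a_5))\alpha(a_2)\beta(a_4)$ (Sweedler notation). $M$ is pointed if its simple comodules are one-dimensional; then its coradical is $\mathbbm{k}G$ with $G$ the group of group-likes, and $\Phi$ restricts to a normalized 3-cocycle on $G$. $M$ is graded if $M=\bigoplus_{n\ge0}M(n)$ is the coradical grading (with $M(0)=\mathbbm{k}G$, $\bigoplus_{i\le n}M(i)$ the coradical filtration) and the multiplication, $S$, $\Phi,\alpha,\beta$ respect it (in particular $\Phi,\alpha,\beta$ vanish when an argument lies in $\bigoplus_{i\ge1}M(i)$). "Generated by $G$ and skew-primitive elements" means generated as an algebra by $G$ and elements $X$ with $\Delta(X)=X\otimes h+g\otimes X$, $g,h\in G$. The category ${}^{\mathbbm{k}G}_{\mathbbm{k}G}\mathcal{YD}^{\Phi}$ has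 as objects $G$-graded vector spaces $V=\bigoplus_{g\in G}V_g$ with maps $G\times V_g\to V_g$, $(e,v)\mapsto e\triangleright v$, such that $1\triangleright v=v$ and $e\triangleright(f\triangleright v)=\widetilde{\Phi}_g(e,f)(ef)\triangleright v$ for $v\in V_g$ (i.e. each $V_g$ is a projective $G$-representation with 2-cocycle $\widetilde{\Phi}_g$). *)

theory Defs
  imports "HOL-Library.Function_Algebras" "HOL-Computational_Algebra.Polynomial"
begin

text \<open>A finite-dimensional vector space M over k is modelled as the space of functions
  'b \<Rightarrow> 'k for a finite type 'b (its basis).  M \<otimes> M is modelled as ('b \<times> 'b) \<Rightarrow> 'k.\<close>

definition bv :: "'b \<Rightarrow> 'b \<Rightarrow> 'k::zero_neq_one" where
  "bv b = (\<lambda>i. if i = b then 1 else 0)"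

definition smul :: "'k::times \<Rightarrow> ('a \<Rightarrow> 'k) \<Rightarrow> ('a \<Rightarrow> 'k)" where
  "smul c v = (\<lambda>i. c * v i)"

definition tens2 :: "('b \<Rightarrow> 'k::times) \<Rightarrow> ('b \<Rightarrow> 'k) \<Rightarrow> ('b \<times> 'b \<Rightarrow> 'k)" where
  "tens2 x y = (\<lambda>(i,j). x i * y j)"

definition lspan :: "('a \<Rightarrow> 'k::field) set \<Rightarrow> ('a \<Rightarrow> 'k) set" where
  "lspan A = {v. \<exists>F c. finite F \<and> F \<subseteq> A \<and> v = (\<Sum>u\<in>F. smul (c u) u)}"

definition subspace_f :: "('a \<Rightarrow> 'k::field) set \<Rightarrow> bool" where
  "subspace_f A \<longleftrightarrow> 0 \<in> A \<and> (\<forall>x\<in>A. \<forall>y\<in>A. x + y \<in> A) \<and> (\<forall>c x. x \<in> A \<longrightarrow> smul c x \<in> A)"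

definition tens_sp :: "('b \<Rightarrow> 'k::field) set \<Rightarrow> ('b \<Rightarrow> 'k) set \<Rightarrow> ('b \<times> 'b \<Rightarrow> 'k) set" where
  "tens_sp A B = lspan {tens2 a b | a b. a \<in> A \<and> b \<in> B}"

definition linear_f :: "(('a \<Rightarrow> 'k::field) \<Rightarrow> ('c \<Rightarrow> 'k)) \<Rightarrow> bool" where
  "linear_f f \<longleftrightarrow> (\<forall>x y. f (x + y) = f x + f y) \<and> (\<forall>c x. f (smul c x) = smul c (f x))"

definition linear_fn :: "(('a \<Rightarrow> 'k::field) \<Rightarrow> 'k) \<Rightarrow> bool" where
  "linear_fn f \<longleftrightarrow> (\<forall>x y. f (x + y) = f x + f y) \<and> (\<forall>c x. f (smul c x) = c * f x)"

definition bilinear_f :: "(('a \<Rightarrow> 'k::field) \<Rightarrow> ('a \<Rightarrow> 'k) \<Rightarrow> ('a \<Rightarrow> 'k)) \<Rightarrow> bool" where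
  "bilinear_f m \<longleftrightarrow> (\<forall>x. linear_f (m x)) \<and> (\<forall>y. linear_f (\<lambda>x. m x y))"

definition trilinear_fn :: "(('a \<Rightarrow> 'k::field) \<Rightarrow> ('a \<Rightarrow> 'k) \<Rightarrow> ('a \<Rightarrow> 'k) \<Rightarrow> 'k) \<Rightarrow> bool" where
  "trilinear_fn P \<longleftrightarrow> (\<forall>y z. linear_fn (\<lambda>x. P x y z)) \<and> (\<forall>x z. linear_fn (\<lambda>y. P x y z))
      \<and> (\<forall>x y. linear_fn (\<lambda>z. P x y z))"

text \<open>(f \<otimes> h) applied to an element of M \<otimes> M, for linear f, h\<close>
definition tmap :: "(('b::finite \<Rightarrow> 'k::field) \<Rightarrow> ('b \<Rightarrow> 'k)) \<Rightarrow> (('b \<Rightarrow> 'k) \<Rightarrow> ('b \<Rightarrow> 'k))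
    \<Rightarrow> ('b \<times> 'b \<Rightarrow> 'k) \<Rightarrow> ('b \<times> 'b \<Rightarrow> 'k)" where
  "tmap f h t = (\<Sum>(i,j)\<in>UNIV. smul (t (i,j)) (tens2 (f (bv i)) (h (bv j))))"

text \<open>Del x (i,j) is the coefficient of bv i \<otimes> bv j in \<Delta>(x).
  D2 Del x i j l is the coefficient of bv i \<otimes> bv j \<otimes> bv l in x_1 \<otimes> x_2 \<otimes> x_3, etc.\<close>

definition D2 :: "(('b::finite \<Rightarrow> 'k::field) \<Rightarrow> ('b \<times> 'b \<Rightarrow> 'k)) \<Rightarrow> ('b \<Rightarrow> 'k) \<Rightarrow> 'b \<Rightarrow> 'b \<Rightarrow> 'b \<Rightarrow> 'k" where
  "D2 Del x i j l = (\<Sum>m\<in>UNIV. Del x (m,l) * Del (bv m) (i,j))"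

definition D3 :: "(('b::finite \<Rightarrow> 'k::field) \<Rightarrow> ('b \<times> 'b \<Rightarrow> 'k)) \<Rightarrow> ('b \<Rightarrow> 'k) \<Rightarrow> 'b \<Rightarrow> 'b \<Rightarrow> 'b \<Rightarrow> 'b \<Rightarrow> 'k" where
  "D3 Del x i j l n = (\<Sum>m\<in>UNIV. D2 Del x i j m * Del (bv m) (l,n))"

definition D4 :: "(('b::finite \<Rightarrow> 'k::field) \<Rightarrow> ('b \<times> 'b \<Rightarrow> 'k)) \<Rightarrow> ('b \<Rightarrow> 'k) \<Rightarrow> 'b \<Rightarrow> 'b \<Rightarrow> 'b \<Rightarrow> 'b \<Rightarrow> 'b \<Rightarrow> 'k" where
  "D4 Del x i j l n p = (\<Sum>m\<in>UNIV. D3 Del x i j l m * Del (bv m) (n,p))"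

definition coalgebra :: "(('b::finite \<Rightarrow> 'k::field) \<Rightarrow> ('b \<times> 'b \<Rightarrow> 'k)) \<Rightarrow> (('b \<Rightarrow> 'k) \<Rightarrow> 'k) \<Rightarrow> bool" where
  "coalgebra Del eps \<longleftrightarrow> linear_f Del \<and> linear_fn eps
    \<and> (\<forall>x i j l. D2 Del x i j l = (\<Sum>m\<in>UNIV. Del x (i,m) * Del (bv m) (j,l)))
    \<and> (\<forall>x j. (\<Sum>i\<in>UNIV. Del x (i,j) * eps (bv i)) = x j)
    \<and> (\<forall>x i. (\<Sum>j\<in>UNIV. Del x (i,j) * eps (bv j)) = x i)"

definition grouplikes :: "(('b::finite \<Rightarrow> 'k::field) \<Rightarrow> ('b \<times> 'b \<Rightarrow> 'k)) \<Rightarrow> (('b \<Rightarrow> 'k) \<Rightarrow> 'k) \<Rightarrow> ('b \<Rightarrow> 'k) set" where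
  "grouplikes Del eps = {g. Del g = tens2 g g \<and> eps g = 1}"

definition skewprims :: "(('b::finite \<Rightarrow> 'k::field) \<Rightarrow> ('b \<times> 'b \<Rightarrow> 'k)) \<Rightarrow> (('b \<Rightarrow> 'k) \<Rightarrow> 'k) \<Rightarrow> ('b \<Rightarrow> 'k) set" where
  "skewprims Del eps = {X. \<exists>g\<in>grouplikes Del eps. \<exists>h\<in>grouplikes Del eps. Del X = tens2 X h + tens2 g X}"

definition subcoalg :: "(('b::finite \<Rightarrow> 'k::field) \<Rightarrow> ('b \<times> 'b \<Rightarrow> 'k)) \<Rightarrow> ('b \<Rightarrow> 'k) set \<Rightarrow> bool" where
  "subcoalg Del C \<longleftrightarrow> subspace_f C \<and> (\<forall>x\<in>C. Del x \<in> tens_sp C C)"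

definition simple_subcoalg :: "(('b::finite \<Rightarrow> 'k::field) \<Rightarrow> ('b \<times> 'b \<Rightarrow> 'k)) \<Rightarrow> ('b \<Rightarrow> 'k) set \<Rightarrow> bool" where
  "simple_subcoalg Del C \<longleftrightarrow> subcoalg Del C \<and> C \<noteq> {0}
     \<and> (\<forall>D. subcoalg Del D \<and> D \<subseteq> C \<longrightarrow> D = {0} \<or> D = C)"

definition pointed :: "(('b::finite \<Rightarrow> 'k::field) \<Rightarrow> ('b \<times> 'b \<Rightarrow> 'k)) \<Rightarrow> bool" where
  "pointed Del \<longleftrightarrow> (\<forall>C. simple_subcoalg Del C \<longrightarrow> (\<exists>v. v \<noteq> 0 \<and> C = {smul c v | c. True}))"

definition corad :: "(('b::finite \<Rightarrow> 'k::field) \<Rightarrow> ('b \<times> 'b \<Rightarrow> 'k)) \<Rightarrow> ('b \<Rightarrow> 'k) set" where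
  "corad Del = lspan (\<Union>{C. simple_subcoalg Del C})"

fun coradfilt :: "(('b::finite \<Rightarrow> 'k::field) \<Rightarrow> ('b \<times> 'b \<Rightarrow> 'k)) \<Rightarrow> nat \<Rightarrow> ('b \<Rightarrow> 'k) set" where
  "coradfilt Del 0 = corad Del"
| "coradfilt Del (Suc n) = {x. Del x \<in> lspan (tens_sp UNIV (coradfilt Del n) \<union> tens_sp (corad Del) UNIV)}"

definition majid_algebra ::
  "(('b::finite \<Rightarrow> 'k::field) \<Rightarrow> ('b \<times> 'b \<Rightarrow> 'k)) \<Rightarrow> (('b \<Rightarrow> 'k) \<Rightarrow> 'k)
   \<Rightarrow> (('b \<Rightarrow> 'k) \<Rightarrow> ('b \<Rightarrow> 'k) \<Rightarrow> ('b \<Rightarrow> 'k)) \<Rightarrow> ('b \<Rightarrow> 'k)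
   \<Rightarrow> (('b \<Rightarrow> 'k) \<Rightarrow> ('b \<Rightarrow> 'k) \<Rightarrow> ('b \<Rightarrow> 'k) \<Rightarrow> 'k)
   \<Rightarrow> (('b \<Rightarrow> 'k) \<Rightarrow> ('b \<Rightarrow> 'k) \<Rightarrow> ('b \<Rightarrow> 'k) \<Rightarrow> 'k)
   \<Rightarrow> (('b \<Rightarrow> 'k) \<Rightarrow> ('b \<Rightarrow> 'k)) \<Rightarrow> (('b \<Rightarrow> 'k) \<Rightarrow> 'k) \<Rightarrow> (('b \<Rightarrow> 'k) \<Rightarrow> 'k) \<Rightarrow> bool"
where
  "majid_algebra Del eps mul one Phi Phiinv S alpha beta \<longleftrightarrow>
    coalgebra Del eps \<and> bilinear_f mul
    \<comment> \<open>unit\<close>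
    \<and> (\<forall>x. mul one x = x \<and> mul x one = x)
    \<comment> \<open>multiplication and unit are coalgebra maps\<close>
    \<and> (\<forall>x y i j. Del (mul x y) (i,j) =
         (\<Sum>(a,a')\<in>UNIV. \<Sum>(b,b')\<in>UNIV. Del x (a,a') * Del y (b,b')
              * mul (bv a) (bv b) i * mul (bv a') (bv b') j))
    \<and> (\<forall>x y. eps (mul x y) = eps x * eps y)
    \<and> Del one = tens2 one one \<and> eps one = 1
    \<comment> \<open>associator\<close>
    \<and> trilinear_fn Phi \<and> trilinear_fn Phiinv
    \<and> (\<forall>x y z.
         (\<Sum>(a,a')\<in>UNIV. \<Sum>(b,b')\<in>UNIV. \<Sum>(c,c')\<in>UNIV.
            smul (Del x (a,a') * Del y (b,b') * Del z (c,c') * Phi (bv a') (bv b') (bv c'))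
                 (mul (bv a) (mul (bv b) (bv c))))
       = (\<Sum>(a,a')\<in>UNIV. \<Sum>(b,b')\<in>UNIV. \<Sum>(c,c')\<in>UNIV.
            smul (Del x (a,a') * Del y (b,b') * Del z (c,c') * Phi (bv a) (bv b) (bv c))
                 (mul (mul (bv a') (bv b')) (bv c'))))
    \<comment> \<open>3-cocycle condition\<close>
    \<and> (\<forall>x y z w.
         (\<Sum>(a1,a2)\<in>UNIV. \<Sum>(b1,b2)\<in>UNIV. \<Sum>(c1,c2)\<in>UNIV. \<Sum>(d1,d2)\<in>UNIV.
            Del x (a1,a2) * Del y (b1,b2) * Del z (c1,c2) * Del w (d1,d2)
            * Phi (bv a1) (bv b1) (mul (bv c1) (bv d1)) * Phi (mul (bv a2) (bv b2)) (bv c2) (bv d2))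
       = (\<Sum>(a1,a2)\<in>UNIV. \<Sum>(b1,b2,b3)\<in>UNIV. \<Sum>(c1,c2,c3)\<in>UNIV. \<Sum>(d1,d2)\<in>UNIV.
            Del x (a1,a2) * D2 Del y b1 b2 b3 * D2 Del z c1 c2 c3 * Del w (d1,d2)
            * Phi (bv b1) (bv c1) (bv d1) * Phi (bv a1) (mul (bv b2) (bv c2)) (bv d2)
            * Phi (bv a2) (bv b3) (bv c3)))
    \<comment> \<open>normalization\<close>
    \<and> (\<forall>x y. Phi x one y = eps x * eps y)
    \<comment> \<open>convolution invertibility, Phiinv being the inverse\<close>
    \<and> (\<forall>x y z.
         (\<Sum>(a,a')\<in>UNIV. \<Sum>(b,b')\<in>UNIV. \<Sum>(c,c')\<in>UNIV.
            Del x (a,a') * Del y (b,b') * Del z (c,c') * Phi (bv a) (bv b) (bv c) * Phiinv (bv a') (bv b') (bv c'))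
          = eps x * eps y * eps z)
    \<and> (\<forall>x y z.
         (\<Sum>(a,a')\<in>UNIV. \<Sum>(b,b')\<in>UNIV. \<Sum>(c,c')\<in>UNIV.
            Del x (a,a') * Del y (b,b') * Del z (c,c') * Phiinv (bv a) (bv b) (bv c) * Phi (bv a') (bv b') (bv c'))
          = eps x * eps y * eps z)
    \<comment> \<open>quasi-antipode\<close>
    \<and> linear_f S \<and> linear_fn alpha \<and> linear_fn beta
    \<and> (\<forall>x. (\<Sum>(i,j,l)\<in>UNIV. smul (D2 Del x i j l * alpha (bv j)) (mul (S (bv i)) (bv l)))
             = smul (alpha x) one)
    \<and> (\<forall>x. (\<Sum>(i,j,l)\<in>UNIV. smul (D2 Del x i j l * beta (bv j)) (mul (bv i) (S (bv l))))
             = smul (beta x) one)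
    \<and> (\<forall>x. (\<Sum>(i1,i2,i3,i4,i5)\<in>UNIV. D4 Del x i1 i2 i3 i4 i5
             * Phi (bv i1) (S (bv i3)) (bv i5) * beta (bv i2) * alpha (bv i4)) = eps x)
    \<and> (\<forall>x. (\<Sum>(i1,i2,i3,i4,i5)\<in>UNIV. D4 Del x i1 i2 i3 i4 i5
             * Phiinv (S (bv i1)) (bv i3) (S (bv i5)) * alpha (bv i2) * beta (bv i4)) = eps x)"

definition grading :: "(nat \<Rightarrow> ('b::finite \<Rightarrow> 'k::field) set) \<Rightarrow> bool" where
  "grading Mg \<longleftrightarrow> (\<forall>n. subspace_f (Mg n))
     \<and> (\<forall>x. \<exists>!c. (\<forall>n. c n \<in> Mg n) \<and> finite {n. c n \<noteq> 0} \<and> x = (\<Sum>n | c n \<noteq> 0. c n))"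

definition gcomp :: "(nat \<Rightarrow> ('b::finite \<Rightarrow> 'k::field) set) \<Rightarrow> nat \<Rightarrow> ('b \<Rightarrow> 'k) \<Rightarrow> ('b \<Rightarrow> 'k)" where
  "gcomp Mg n x = (THE v. \<exists>c. (\<forall>m. c m \<in> Mg m) \<and> finite {m. c m \<noteq> 0}
                         \<and> x = (\<Sum>m | c m \<noteq> 0. c m) \<and> v = c n)"

definition graded_majid ::
  "(('b::finite \<Rightarrow> 'k::field) \<Rightarrow> ('b \<times> 'b \<Rightarrow> 'k)) \<Rightarrow> (('b \<Rightarrow> 'k) \<Rightarrow> 'k)
   \<Rightarrow> (('b \<Rightarrow> 'k) \<Rightarrow> ('b \<Rightarrow> 'k) \<Rightarrow> ('b \<Rightarrow> 'k)) \<Rightarrow> ('b \<Rightarrow> 'k)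
   \<Rightarrow> (('b \<Rightarrow> 'k) \<Rightarrow> ('b \<Rightarrow> 'k) \<Rightarrow> ('b \<Rightarrow> 'k) \<Rightarrow> 'k)
   \<Rightarrow> (('b \<Rightarrow> 'k) \<Rightarrow> ('b \<Rightarrow> 'k)) \<Rightarrow> (('b \<Rightarrow> 'k) \<Rightarrow> 'k) \<Rightarrow> (('b \<Rightarrow> 'k) \<Rightarrow> 'k)
   \<Rightarrow> (nat \<Rightarrow> ('b \<Rightarrow> 'k) set) \<Rightarrow> bool"
where
  "graded_majid Del eps mul one Phi S alpha beta Mg \<longleftrightarrow>
     grading Mg
     \<and> Mg 0 = lspan (grouplikes Del eps)
     \<and> (\<forall>n. lspan (\<Union>i\<le>n. Mg i) = coradfilt Del n)
     \<and> (\<forall>n x. x \<in> Mg n \<longrightarrow> Del x \<in> lspan (\<Union>i\<le>n. tens_sp (Mg i) (Mg (n - i))))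
     \<and> (\<forall>n x. 1 \<le> n \<longrightarrow> x \<in> Mg n \<longrightarrow> eps x = 0)
     \<and> (\<forall>i j x y. x \<in> Mg i \<longrightarrow> y \<in> Mg j \<longrightarrow> mul x y \<in> Mg (i + j))
     \<and> one \<in> Mg 0
     \<and> (\<forall>n x. x \<in> Mg n \<longrightarrow> S x \<in> Mg n)
     \<and> (\<forall>n x. 1 \<le> n \<longrightarrow> x \<in> Mg n \<longrightarrow>
          (\<forall>y z. Phi x y z = 0 \<and> Phi y x z = 0 \<and> Phi y z x = 0) \<and> alpha x = 0 \<and> beta x = 0)"

definition gen_subalg :: "(('b::finite \<Rightarrow> 'k::field) \<Rightarrow> ('b \<Rightarrow> 'k) \<Rightarrow> ('b \<Rightarrow> 'k)) \<Rightarrow> ('b \<Rightarrow> 'k)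
    \<Rightarrow> ('b \<Rightarrow> 'k) set \<Rightarrow> ('b \<Rightarrow> 'k) set" where
  "gen_subalg mul one A = \<Inter>{B. subspace_f B \<and> one \<in> B \<and> A \<subseteq> B \<and> (\<forall>x\<in>B. \<forall>y\<in>B. mul x y \<in> B)}"

text \<open>R_g, with P the projection \<pi> onto M(0)\<close>
definition Rg :: "(('b::finite \<Rightarrow> 'k::field) \<Rightarrow> ('b \<times> 'b \<Rightarrow> 'k)) \<Rightarrow> (('b \<Rightarrow> 'k) \<Rightarrow> ('b \<Rightarrow> 'k))
    \<Rightarrow> ('b \<Rightarrow> 'k) \<Rightarrow> ('b \<Rightarrow> 'k) \<Rightarrow> ('b \<Rightarrow> 'k) set" where
  "Rg Del P one g = {m. tmap P id (Del m) = tens2 g m \<and> tmap id P (Del m) = tens2 m one}"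

definition Rset :: "(('b::finite \<Rightarrow> 'k::field) \<Rightarrow> ('b \<times> 'b \<Rightarrow> 'k)) \<Rightarrow> (('b \<Rightarrow> 'k) \<Rightarrow> ('b \<Rightarrow> 'k))
    \<Rightarrow> ('b \<Rightarrow> 'k) \<Rightarrow> ('b \<Rightarrow> 'k) set" where
  "Rset Del P one = {m. tmap id P (Del m) = tens2 m one}"

definition ginv :: "(('b \<Rightarrow> 'k) \<Rightarrow> ('b \<Rightarrow> 'k) \<Rightarrow> ('b \<Rightarrow> 'k)) \<Rightarrow> ('b \<Rightarrow> 'k) \<Rightarrow> ('b \<Rightarrow> 'k) set
    \<Rightarrow> ('b \<Rightarrow> 'k) \<Rightarrow> ('b \<Rightarrow> 'k)" where
  "ginv mul one G f = (THE h. h \<in> G \<and> mul f h = one)"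

definition gact :: "(('b \<Rightarrow> 'k::field) \<Rightarrow> ('b \<Rightarrow> 'k) \<Rightarrow> ('b \<Rightarrow> 'k)) \<Rightarrow> ('b \<Rightarrow> 'k)
    \<Rightarrow> (('b \<Rightarrow> 'k) \<Rightarrow> ('b \<Rightarrow> 'k) \<Rightarrow> ('b \<Rightarrow> 'k) \<Rightarrow> 'k) \<Rightarrow> ('b \<Rightarrow> 'k) set
    \<Rightarrow> ('b \<Rightarrow> 'k) \<Rightarrow> ('b \<Rightarrow> 'k) \<Rightarrow> ('b \<Rightarrow> 'k) \<Rightarrow> ('b \<Rightarrow> 'k)" where
  "gact mul one Phi G g f X =
     smul (Phi (mul f g) (ginv mul one G f) f / Phi f (ginv mul one G f) f)
          (mul (mul f X) (ginv mul one G f))"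

definition Phitilde :: "(('b \<Rightarrow> 'k::field) \<Rightarrow> ('b \<Rightarrow> 'k) \<Rightarrow> ('b \<Rightarrow> 'k) \<Rightarrow> 'k)
    \<Rightarrow> ('b \<Rightarrow> 'k) \<Rightarrow> ('b \<Rightarrow> 'k) \<Rightarrow> ('b \<Rightarrow> 'k) \<Rightarrow> 'k" where
  "Phitilde Phi g e f = Phi g e f * Phi e f g / Phi e g f"

end

theory Submission
  imports Defs
begin

(*
  Write \<pi> for the projection onto M(0) = kG and say that Y has bidegree (h, k) if
  (\<pi> \<otimes> id)\<Delta>Y = h \<otimes> Y and (id \<otimes> \<pi>)\<Delta>Y = Y \<otimes> k, so that R_g consists of the elements of
  bidegree (g, 1). The associator vanishes outside degree 0, so for x, y, z of bidegrees
  (h1, k1), (h2, k2), (h3, k3) quasi-associativity collapses to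
  \<Phi>(k1, k2, k3) x(yz) = \<Phi>(h1, h2, h3) (xy)z,
  while multiplying by a group-like on either side shifts bidegrees accordingly. Hence f \<triangleright> X
  lies in R_g, and its scalar is exactly the one making (f \<triangleright> X) f = f X. Right multiplication
  by a group-like is injective on elements of a fixed bidegree, so the composition law follows
  from (e \<triangleright> (f \<triangleright> X)) (ef) = Phitilde_g(e, f) (ef) X, which takes three rebracketings and the
  normalisation \<Phi>(a, b, 1) = \<Phi>(1, a, b) = 1 on group-likes (a consequence of the cocycle
  identity). The decomposition R = \<Oplus>_g R_g splits (\<pi> \<otimes> id)\<Delta>m along the basis G of M(0);
  coassociativity puts each piece into R_g, and linear independence of group-likes makes the
  sum direct.
*)

lemma sum_apply: "(\<Sum>i\<in>A. f i) x = (\<Sum>i\<in>A. f i x)"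
  by (induct A rule: infinite_finite_induct) auto

lemma smul_apply [simp]: "smul c v i = c * v i"
  by (simp add: smul_def)

lemma tens2_apply [simp]: "tens2 x y (i, j) = x i * y j"
  by (simp add: tens2_def)

lemma smul_one [simp]: "smul 1 x = (x :: 'a \<Rightarrow> 'k::field)"
  by (rule ext) simp

lemma smul_zero_left [simp]: "smul 0 x = (0 :: 'a \<Rightarrow> 'k::field)"
  by (rule ext) simp

lemma smul_smul: "smul a (smul b x) = smul (a * b) (x :: 'a \<Rightarrow> 'k::field)"
  by (rule ext) simp

lemma smul_sum: "smul c (\<Sum>i\<in>A. x i) = (\<Sum>i\<in>A. smul c (x i :: 'a \<Rightarrow> 'k::field))"
  by (rule ext) (simp add: sum_apply sum_distrib_left)

lemma smul_add_left: "smul (a + b) u = smul a u + smul b (u :: 'a \<Rightarrow> 'k::field)"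
  by (rule ext) (simp add: algebra_simps)

lemma smul_eq_smulD:
  "a \<noteq> 0 \<Longrightarrow> smul a x = smul b y \<Longrightarrow> x = smul (b / a) (y :: 'a \<Rightarrow> 'k::field)"
  by (rule ext) (drule fun_cong, simp add: field_simps)

lemma sum_bv_coord: "(\<Sum>i\<in>UNIV. v i * bv i p) = v p" for v :: "'b::finite \<Rightarrow> 'k::field"
  by (simp add: bv_def if_distrib[of "\<lambda>x. _ * x"] cong: if_cong)

lemma sum_smul_bv: "(\<Sum>i\<in>UNIV. smul (v i) (bv i)) = (v :: 'b::finite \<Rightarrow> 'k::field)"
  by (rule ext) (simp add: sum_apply sum_bv_coord)

lemma sum_pair: "(\<Sum>(i, j)\<in>UNIV. h i j) = (\<Sum>i\<in>UNIV. \<Sum>j\<in>(UNIV :: 'b::finite set). h i j)"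
  by (simp only: sum.cartesian_product UNIV_Times_UNIV)

lemma sum_triple:
  "(\<Sum>(i, j, l)\<in>UNIV. h i j l) = (\<Sum>i\<in>UNIV. \<Sum>j\<in>UNIV. \<Sum>l\<in>(UNIV :: 'b::finite set). h i j l)"
  by (simp only: sum.cartesian_product UNIV_Times_UNIV)

lemma sum_pair_swap:
  "(\<Sum>(a, a')\<in>A. \<Sum>(b, b')\<in>B. F a a' b b') = (\<Sum>(b, b')\<in>B. \<Sum>(a, a')\<in>A. F a a' b b')"
  by (simp only: split_def) (rule sum.swap)

lemma linear_f_add: "linear_f f \<Longrightarrow> f (x + y) = f x + f y"
  by (simp add: linear_f_def)

lemma linear_f_smul: "linear_f f \<Longrightarrow> f (smul c x) = smul c (f x)"
  by (simp add: linear_f_def)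

lemma linear_f_zero: "linear_f f \<Longrightarrow> f 0 = 0"
  using linear_f_smul[of f 0 0] by (simp add: smul_def zero_fun_def)

lemma linear_f_sum: "linear_f f \<Longrightarrow> f (\<Sum>i\<in>A. x i) = (\<Sum>i\<in>A. f (x i))"
  by (induct A rule: infinite_finite_induct) (auto simp: linear_f_zero linear_f_add)

lemma linear_f_zero_map: "linear_f (\<lambda>_. 0)"
  by (simp add: linear_f_def fun_eq_iff)

lemma linear_f_comp: "linear_f f \<Longrightarrow> linear_f g \<Longrightarrow> linear_f (\<lambda>x. f (g x))"
  by (simp add: linear_f_def)

lemma linear_f_coords:
  fixes f :: "('b::finite \<Rightarrow> 'k::field) \<Rightarrow> ('c \<Rightarrow> 'k)"
  assumes "linear_f f"
  shows "(\<Sum>i\<in>UNIV. v i * f (bv i) p) = f v p"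
proof -
  have "f v = (\<Sum>i\<in>UNIV. smul (v i) (f (bv i)))"
    by (subst (1) sum_smul_bv[symmetric]) (simp only: linear_f_sum[OF assms] linear_f_smul[OF assms])
  then show ?thesis by (simp add: sum_apply)
qed

lemma linear_fn_add: "linear_fn f \<Longrightarrow> f (x + y) = f x + f y"
  by (simp add: linear_fn_def)

lemma linear_fn_smul: "linear_fn f \<Longrightarrow> f (smul c x) = c * f x"
  by (simp add: linear_fn_def)

lemma linear_fn_zero: "linear_fn f \<Longrightarrow> f 0 = 0"
  using linear_fn_smul[of f 0 0] by (simp add: smul_def zero_fun_def)

lemma linear_fn_sum: "linear_fn f \<Longrightarrow> f (\<Sum>i\<in>A. x i) = (\<Sum>i\<in>A. f (x i))"
  by (induct A rule: infinite_finite_induct) (auto simp: linear_fn_zero linear_fn_add)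

lemma linear_fn_comp: "linear_fn f \<Longrightarrow> linear_f g \<Longrightarrow> linear_fn (\<lambda>x. f (g x))"
  by (simp add: linear_f_def linear_fn_def)

lemma linear_fn_mult_right: "linear_fn f \<Longrightarrow> linear_fn (\<lambda>x. f x * c)"
  by (simp add: linear_fn_def algebra_simps)

lemma linear_fn_apply: "linear_f f \<Longrightarrow> linear_fn (\<lambda>x. f x p)"
  by (simp add: linear_f_def linear_fn_def)

lemma linear_fn_coords:
  fixes f :: "('b::finite \<Rightarrow> 'k::field) \<Rightarrow> 'k"
  assumes "linear_fn f"
  shows "(\<Sum>i\<in>UNIV. v i * f (bv i)) = f v"
  by (subst (2) sum_smul_bv[symmetric]) (simp only: linear_fn_sum[OF assms] linear_fn_smul[OF assms])

lemma tens2_linear_left: "linear_f (\<lambda>x. tens2 x y)"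
  by (simp add: linear_f_def tens2_def fun_eq_iff algebra_simps)

lemma tens2_linear_right: "linear_f (tens2 x)"
  by (simp add: linear_f_def tens2_def fun_eq_iff algebra_simps)

lemma tmap_linear: "linear_f (tmap f h)"
  unfolding linear_f_def tmap_def
  by (simp add: smul_add_left sum.distrib smul_sum smul_smul case_prod_beta)

lemma tmap_id_left:
  assumes "linear_f h"
  shows "tmap id h t (p, q) = h (\<lambda>j. t (p, j)) q"
proof -
  have "tmap id h t (p, q) = (\<Sum>i\<in>UNIV. (\<Sum>j\<in>UNIV. t (i, j) * h (bv j) q) * bv i p)"
    by (simp add: tmap_def sum_apply sum_pair sum_distrib_left sum_distrib_right mult_ac)
  also have "\<dots> = h (\<lambda>j. t (p, j)) q"
    by (simp only: sum_bv_coord linear_f_coords[OF assms])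
  finally show ?thesis .
qed

lemma tmap_id_right:
  assumes "linear_f h"
  shows "tmap h id t (p, q) = h (\<lambda>i. t (i, q)) p"
proof -
  have "tmap h id t (p, q) = (\<Sum>i\<in>UNIV. (\<Sum>j\<in>UNIV. t (i, j) * bv j q) * h (bv i) p)"
    by (simp add: tmap_def sum_apply sum_pair sum_distrib_left sum_distrib_right mult_ac)
  also have "\<dots> = h (\<lambda>i. t (i, q)) p"
    by (simp only: sum_bv_coord linear_f_coords[OF assms])
  finally show ?thesis .
qed

lemma subspace_f_sum:
  "subspace_f A \<Longrightarrow> (\<And>i. i \<in> F \<Longrightarrow> x i \<in> A) \<Longrightarrow> (\<Sum>i\<in>F. x i) \<in> A"
  by (induct F rule: infinite_finite_induct) (auto simp: subspace_f_def)

lemma subspace_f_equalizer: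
  assumes "linear_f L1" "linear_f L2"
  shows "subspace_f {x. L1 x = L2 x}"
  using assms by (simp add: subspace_f_def linear_f_zero linear_f_add linear_f_smul)

lemma subspace_f_Int: "subspace_f A \<Longrightarrow> subspace_f B \<Longrightarrow> subspace_f (A \<inter> B)"
  by (simp add: subspace_f_def)

lemma lspan_base: "u \<in> A \<Longrightarrow> u \<in> lspan A"
  unfolding lspan_def by (rule CollectI, rule exI[of _ "{u}"], rule exI[of _ "\<lambda>_. 1"]) (simp add: smul_def)

lemma lspan_least: "subspace_f B \<Longrightarrow> A \<subseteq> B \<Longrightarrow> lspan A \<subseteq> B"
  unfolding lspan_def by (auto intro!: subspace_f_sum simp: subspace_f_def)

lemma lspan_subspace: "subspace_f (lspan A)"
proof -
  have add: "x + y \<in> lspan A" if "x \<in> lspan A" "y \<in> lspan A" for x y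
  proof -
    from that obtain F1 c1 F2 c2 where F: "finite F1" "F1 \<subseteq> A" "x = (\<Sum>u\<in>F1. smul (c1 u) u)"
      "finite F2" "F2 \<subseteq> A" "y = (\<Sum>u\<in>F2. smul (c2 u) u)"
      unfolding lspan_def by blast
    let ?c = "\<lambda>u. (if u \<in> F1 then c1 u else 0) + (if u \<in> F2 then c2 u else 0)"
    have "x = (\<Sum>u\<in>F1 \<union> F2. smul (if u \<in> F1 then c1 u else 0) u)"
      unfolding F(3) by (rule sum.mono_neutral_cong_left) (use F in auto)
    moreover have "y = (\<Sum>u\<in>F1 \<union> F2. smul (if u \<in> F2 then c2 u else 0) u)"
      unfolding F(6) by (rule sum.mono_neutral_cong_left) (use F in auto)
    ultimately have "x + y = (\<Sum>u\<in>F1 \<union> F2. smul (?c u) u)"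
      by (simp only: sum.distrib smul_add_left)
    with F have "finite (F1 \<union> F2) \<and> F1 \<union> F2 \<subseteq> A \<and> x + y = (\<Sum>u\<in>F1 \<union> F2. smul (?c u) u)"
      by blast
    then show ?thesis
      unfolding lspan_def by (intro CollectI exI)
  qed
  have "smul c x \<in> lspan A" if "x \<in> lspan A" for c x
  proof -
    from that obtain F c1 where F: "finite F" "F \<subseteq> A" "x = (\<Sum>u\<in>F. smul (c1 u) u)"
      unfolding lspan_def by blast
    then have "finite F \<and> F \<subseteq> A \<and> smul c x = (\<Sum>u\<in>F. smul ((\<lambda>u. c * c1 u) u) u)"
      by (simp only: smul_sum smul_smul)
    then show ?thesis
      unfolding lspan_def by (intro CollectI exI)
  qed
  moreover have "0 \<in> lspan A"
    unfolding lspan_def by (rule CollectI, rule exI[of _ "{}"]) simp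
  ultimately show ?thesis
    unfolding subspace_f_def using add by blast
qed

lemma lspan_linear_eq:
  assumes "linear_f L1" "linear_f L2" "\<And>u. u \<in> A \<Longrightarrow> L1 u = L2 u" "v \<in> lspan A"
  shows "L1 v = L2 v"
  using lspan_least[OF subspace_f_equalizer[OF assms(1,2)]] assms(3,4) by blast

lemma gcomp_unique:
  assumes gr: "grading Mg"
    and c: "\<forall>m. c m \<in> Mg m" "finite {m. c m \<noteq> 0}" "x = (\<Sum>m | c m \<noteq> 0. c m)"
  shows "gcomp Mg n x = c n"
proof -
  from gr obtain d where unique: "\<And>e. (\<forall>m. e m \<in> Mg m) \<and> finite {m. e m \<noteq> 0}
      \<and> x = (\<Sum>m | e m \<noteq> 0. e m) \<Longrightarrow> e = d"
    unfolding grading_def by metis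
  show ?thesis
    unfolding gcomp_def
  proof (rule the_equality)
    fix v
    assume "\<exists>c'. (\<forall>m. c' m \<in> Mg m) \<and> finite {m. c' m \<noteq> 0} \<and> x = (\<Sum>m | c' m \<noteq> 0. c' m) \<and> v = c' n"
    then show "v = c n"
      using unique c by metis
  qed (use c in blast)
qed

lemma gcomp_decomp:
  assumes "grading Mg"
  shows "(\<forall>m. gcomp Mg m x \<in> Mg m) \<and> finite {m. gcomp Mg m x \<noteq> 0}
    \<and> x = (\<Sum>m | gcomp Mg m x \<noteq> 0. gcomp Mg m x)"
proof -
  from assms obtain d where d: "\<forall>m. d m \<in> Mg m" "finite {m. d m \<noteq> 0}" "x = (\<Sum>m | d m \<noteq> 0. d m)"
    unfolding grading_def by metis
  with gcomp_unique[OF assms d] show ?thesis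
    by simp
qed

lemma gcomp_homogeneous:
  assumes gr: "grading Mg" and z: "z \<in> Mg k"
  shows "gcomp Mg n z = (if n = k then z else 0)"
proof (rule gcomp_unique[OF gr])
  have "{m. (if m = k then z else 0) \<noteq> 0} = (if z = 0 then {} else {k})"
    by auto
  then show "finite {m. (if m = k then z else 0) \<noteq> 0}"
    and "z = (\<Sum>m | (if m = k then z else 0) \<noteq> 0. if m = k then z else 0)"
    by simp_all
  show "\<forall>m. (if m = k then z else 0) \<in> Mg m"
    using z gr by (simp add: grading_def subspace_f_def)
qed

lemma gcomp_expand:
  assumes "grading Mg" "finite T" "{m. gcomp Mg m x \<noteq> 0} \<subseteq> T"
  shows "x = (\<Sum>m\<in>T. gcomp Mg m x)"
proof -
  have "x = (\<Sum>m | gcomp Mg m x \<noteq> 0. gcomp Mg m x)"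
    using gcomp_decomp[OF assms(1)] by blast
  also have "\<dots> = (\<Sum>m\<in>T. gcomp Mg m x)"
    by (rule sum.mono_neutral_left) (use assms in auto)
  finally show ?thesis .
qed

lemma gcomp_add:
  assumes gr: "grading Mg"
  shows "gcomp Mg n (x + y) = gcomp Mg n x + gcomp Mg n y"
proof (rule gcomp_unique[OF gr])
  let ?T = "{m. gcomp Mg m x \<noteq> 0} \<union> {m. gcomp Mg m y \<noteq> 0}"
  have T: "finite ?T" "{m. gcomp Mg m x + gcomp Mg m y \<noteq> 0} \<subseteq> ?T"
    using gcomp_decomp[OF gr] by auto
  show "finite {m. gcomp Mg m x + gcomp Mg m y \<noteq> 0}"
    using finite_subset[OF T(2,1)] .
  have "x + y = (\<Sum>m\<in>?T. gcomp Mg m x + gcomp Mg m y)"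
    using gcomp_expand[OF gr T(1), of x] gcomp_expand[OF gr T(1), of y] by (auto simp: sum.distrib)
  also have "\<dots> = (\<Sum>m | gcomp Mg m x + gcomp Mg m y \<noteq> 0. gcomp Mg m x + gcomp Mg m y)"
    by (rule sum.mono_neutral_right[OF T(1,2)]) auto
  finally show "x + y = (\<Sum>m | gcomp Mg m x + gcomp Mg m y \<noteq> 0. gcomp Mg m x + gcomp Mg m y)" .
  show "\<forall>m. gcomp Mg m x + gcomp Mg m y \<in> Mg m"
    using gcomp_decomp[OF gr] gr by (simp add: grading_def subspace_f_def)
qed

lemma gcomp_smul:
  assumes gr: "grading Mg"
  shows "gcomp Mg n (smul a x) = smul a (gcomp Mg n x)"
proof (rule gcomp_unique[OF gr])
  let ?T = "{m. gcomp Mg m x \<noteq> 0}"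
  have T: "finite ?T" "{m. smul a (gcomp Mg m x) \<noteq> 0} \<subseteq> ?T"
    using gcomp_decomp[OF gr] by auto
  show "finite {m. smul a (gcomp Mg m x) \<noteq> 0}"
    using finite_subset[OF T(2,1)] .
  have "smul a x = (\<Sum>m\<in>?T. smul a (gcomp Mg m x))"
    using gcomp_expand[OF gr T(1) order_refl] by (simp add: smul_sum[symmetric])
  also have "\<dots> = (\<Sum>m | smul a (gcomp Mg m x) \<noteq> 0. smul a (gcomp Mg m x))"
    by (rule sum.mono_neutral_right[OF T]) auto
  finally show "smul a x = (\<Sum>m | smul a (gcomp Mg m x) \<noteq> 0. smul a (gcomp Mg m x))" .
  show "\<forall>m. smul a (gcomp Mg m x) \<in> Mg m"
    using gcomp_decomp[OF gr] gr by (simp add: grading_def subspace_f_def)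
qed

lemma gcomp_linear: "grading Mg \<Longrightarrow> linear_f (gcomp Mg n)"
  by (simp add: linear_f_def gcomp_add gcomp_smul)

lemma grading_linear_f_eq:
  assumes gr: "grading Mg" and L: "linear_f L1" "linear_f L2"
    and homogeneous: "\<And>n z. z \<in> Mg n \<Longrightarrow> L1 z = L2 z"
  shows "L1 x = L2 x"
proof -
  let ?T = "{m. gcomp Mg m x \<noteq> 0}"
  have x: "x = (\<Sum>m\<in>?T. gcomp Mg m x)"
    using gcomp_decomp[OF gr] by blast
  have "L1 x = (\<Sum>m\<in>?T. L1 (gcomp Mg m x))"
    by (subst x) (rule linear_f_sum[OF L(1)])
  also have "\<dots> = (\<Sum>m\<in>?T. L2 (gcomp Mg m x))"
    using gcomp_decomp[OF gr] homogeneous by (intro sum.cong) auto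
  also have "\<dots> = L2 x"
    by (subst (2) x) (rule linear_f_sum[OF L(2), symmetric])
  finally show ?thesis .
qed

lemma grading_linear_fn_eq:
  assumes gr: "grading Mg" and L: "linear_fn L1" "linear_fn L2"
    and homogeneous: "\<And>n z. z \<in> Mg n \<Longrightarrow> L1 z = L2 z"
  shows "L1 x = L2 x"
proof -
  let ?T = "{m. gcomp Mg m x \<noteq> 0}"
  have x: "x = (\<Sum>m\<in>?T. gcomp Mg m x)"
    using gcomp_decomp[OF gr] by blast
  have "L1 x = (\<Sum>m\<in>?T. L1 (gcomp Mg m x))"
    by (subst x) (rule linear_fn_sum[OF L(1)])
  also have "\<dots> = (\<Sum>m\<in>?T. L2 (gcomp Mg m x))"
    using gcomp_decomp[OF gr] homogeneous by (intro sum.cong) auto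
  also have "\<dots> = L2 x"
    by (subst (2) x) (rule linear_fn_sum[OF L(2), symmetric])
  finally show ?thesis .
qed

lemma linear_fn_gcomp0:
  assumes gr: "grading Mg" and L: "linear_fn L"
    and positive: "\<And>n z. 1 \<le> n \<Longrightarrow> z \<in> Mg n \<Longrightarrow> L z = 0"
  shows "L x = L (gcomp Mg 0 x)"
proof (rule grading_linear_fn_eq[OF gr L linear_fn_comp[OF L gcomp_linear[OF gr]]])
  fix n z
  assume z: "z \<in> Mg n"
  show "L z = L (gcomp Mg 0 z)"
  proof (cases "n = 0")
    case False
    then show ?thesis
      using gcomp_homogeneous[OF gr z] positive[OF _ z] linear_fn_zero[OF L] by simp
  qed (use gcomp_homogeneous[OF gr z] in simp)
qed

(* Dedekind's argument: applying \<Delta> to a relation among group-likes and subtracting h i times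
   the relation eliminates h. *)
lemma grouplike_relation_shift:
  assumes Del: "linear_f Del" and F: "finite F" "h \<notin> F" "insert h F \<subseteq> grouplikes Del eps"
    and rel: "\<And>p. (\<Sum>g\<in>insert h F. l g * g p) = 0"
  shows "(\<Sum>g\<in>F. l g * (g i - h i) * g j) = 0"
proof -
  have lin: "(\<Sum>g\<in>F. l g * g p) = - (l h * h p)" for p
    using rel[of p] F by (simp add: eq_neg_iff_add_eq_0 add.commute)
  have "(\<Sum>g\<in>insert h F. smul (l g) g) = 0"
    using rel by (simp add: fun_eq_iff sum_apply)
  then have "(\<Sum>g\<in>insert h F. smul (l g) (Del g)) = 0"
    using linear_f_zero[OF Del] by (simp only: linear_f_sum[OF Del, symmetric] linear_f_smul[OF Del, symmetric])
  then have "(\<Sum>g\<in>insert h F. l g * Del g (i, j)) = 0"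
    by (simp add: fun_eq_iff sum_apply)
  moreover have "Del g (i, j) = g i * g j" if "g \<in> insert h F" for g
    using F(3) that by (auto simp: grouplikes_def)
  ultimately have "l h * (h i * h j) + (\<Sum>g\<in>F. l g * (g i * g j)) = 0"
    using F(1,2) by simp
  then have coprod: "(\<Sum>g\<in>F. l g * (g i * g j)) = - (l h * (h i * h j))"
    by (simp add: eq_neg_iff_add_eq_0 add.commute)
  have "(\<Sum>g\<in>F. l g * (g i - h i) * g j) = (\<Sum>g\<in>F. l g * (g i * g j)) - h i * (\<Sum>g\<in>F. l g * g j)"
    by (simp add: sum_subtractf sum_distrib_left algebra_simps)
  also have "\<dots> = 0"
    by (simp only: coprod lin) (simp add: algebra_simps)
  finally show ?thesis .
qed

lemma grouplikes_independent:
  assumes Del: "linear_f Del" and eps: "linear_fn eps"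
    and "finite F" "F \<subseteq> grouplikes Del eps" "\<And>p. (\<Sum>g\<in>F. l g * g p) = 0" "g \<in> F"
  shows "l g = 0"
  using assms(3-)
proof (induction F arbitrary: l g rule: finite_induct)
  case empty
  then show ?case by simp
next
  case (insert h F)
  have shift: "(\<Sum>g\<in>F. l g * (g i - h i) * g j) = 0" for i j
    by (rule grouplike_relation_shift[OF Del insert(1,2) insert.prems(1,2)])
  have lF: "l g = 0" if g: "g \<in> F" for g
  proof -
    have "g \<noteq> h"
      using g insert(2) by blast
    then obtain i where "g i \<noteq> h i"
      by (meson ext)
    moreover have "l g * (g i - h i) = 0"
      by (rule insert.IH[OF _ shift g]) (use insert.prems(1) in simp)
    ultimately show ?thesis
      by simp
  qed
  have "h \<noteq> 0"
    using insert.prems(1) linear_fn_zero[OF eps] by (auto simp: grouplikes_def)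
  then obtain p where "h p \<noteq> 0"
    by (auto simp: fun_eq_iff)
  moreover have "l h * h p = 0"
    using insert.prems(2)[of p] insert(1,2) lF by simp
  ultimately show ?case
    using insert.prems(3) lF by auto
qed

locale graded_majid_abelian =
  fixes Del :: "('b::finite \<Rightarrow> 'k::field) \<Rightarrow> ('b \<times> 'b \<Rightarrow> 'k)"
    and eps :: "('b \<Rightarrow> 'k) \<Rightarrow> 'k"
    and mul :: "('b \<Rightarrow> 'k) \<Rightarrow> ('b \<Rightarrow> 'k) \<Rightarrow> ('b \<Rightarrow> 'k)"
    and one :: "'b \<Rightarrow> 'k"
    and Phi Phiinv :: "('b \<Rightarrow> 'k) \<Rightarrow> ('b \<Rightarrow> 'k) \<Rightarrow> ('b \<Rightarrow> 'k) \<Rightarrow> 'k"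
    and S :: "('b \<Rightarrow> 'k) \<Rightarrow> ('b \<Rightarrow> 'k)"
    and alpha beta :: "('b \<Rightarrow> 'k) \<Rightarrow> 'k"
    and Mg :: "nat \<Rightarrow> ('b \<Rightarrow> 'k) set"
    and G :: "('b \<Rightarrow> 'k) set"
  assumes majid: "majid_algebra Del eps mul one Phi Phiinv S alpha beta"
    and graded: "graded_majid Del eps mul one Phi S alpha beta Mg"
    and G_def: "G = grouplikes Del eps"
    and G_finite: "finite G"
    and G_mult_closed: "\<forall>g\<in>G. \<forall>h\<in>G. mul g h \<in> G"
    and G_inverse: "\<forall>g\<in>G. \<exists>h\<in>G. mul g h = one \<and> mul h g = one"
    and G_abelian: "\<forall>g\<in>G. \<forall>h\<in>G. mul g h = mul h g"
begin

lemma Del_linear: "linear_f Del"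
  and eps_linear: "linear_fn eps"
  and coassoc: "(\<Sum>m\<in>UNIV. Del x (m, l) * Del (bv m) (i, j)) = (\<Sum>m\<in>UNIV. Del x (i, m) * Del (bv m) (j, l))"
  and counit_left: "(\<Sum>i\<in>UNIV. Del x (i, j) * eps (bv i)) = x j"
  using majid by (simp_all add: majid_algebra_def coalgebra_def D2_def)

lemma mul_linear_right: "linear_f (mul x)"
  and mul_linear_left: "linear_f (\<lambda>x. mul x y)"
  using majid by (simp_all add: majid_algebra_def bilinear_f_def)

lemma mul_one_left [simp]: "mul one x = x"
  and mul_one_right [simp]: "mul x one = x"
  using majid by (simp_all add: majid_algebra_def)

lemma Del_mul: "Del (mul x y) (i, j) = (\<Sum>(a, a')\<in>UNIV. \<Sum>(b, b')\<in>UNIV.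
    Del x (a, a') * Del y (b, b') * mul (bv a) (bv b) i * mul (bv a') (bv b') j)"
  using majid by (simp add: majid_algebra_def)

lemma Del_one: "Del one = tens2 one one"
  and eps_one: "eps one = 1"
  and Phi_normal: "Phi x one y = eps x * eps y"
  using majid by (simp_all add: majid_algebra_def)

lemma Phi_linear1: "linear_fn (\<lambda>x. Phi x y z)"
  and Phi_linear2: "linear_fn (\<lambda>y. Phi x y z)"
  and Phi_linear3: "linear_fn (Phi x y)"
  and Phiinv_linear1: "linear_fn (\<lambda>x. Phiinv x y z)"
  and Phiinv_linear2: "linear_fn (\<lambda>y. Phiinv x y z)"
  and Phiinv_linear3: "linear_fn (Phiinv x y)"
  using majid by (simp_all add: majid_algebra_def trilinear_fn_def)

lemma quasi_assoc:
  "(\<Sum>(a, a')\<in>UNIV. \<Sum>(b, b')\<in>UNIV. \<Sum>(c, c')\<in>UNIV.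
      smul (Del x (a, a') * Del y (b, b') * Del z (c, c') * Phi (bv a') (bv b') (bv c'))
           (mul (bv a) (mul (bv b) (bv c))))
   = (\<Sum>(a, a')\<in>UNIV. \<Sum>(b, b')\<in>UNIV. \<Sum>(c, c')\<in>UNIV.
      smul (Del x (a, a') * Del y (b, b') * Del z (c, c') * Phi (bv a) (bv b) (bv c))
           (mul (mul (bv a') (bv b')) (bv c')))"
  using majid by (simp add: majid_algebra_def)

lemma cocycle:
  "(\<Sum>(a1, a2)\<in>UNIV. \<Sum>(b1, b2)\<in>UNIV. \<Sum>(c1, c2)\<in>UNIV. \<Sum>(d1, d2)\<in>UNIV.
      Del x (a1, a2) * Del y (b1, b2) * Del z (c1, c2) * Del w (d1, d2)
      * Phi (bv a1) (bv b1) (mul (bv c1) (bv d1)) * Phi (mul (bv a2) (bv b2)) (bv c2) (bv d2))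
   = (\<Sum>(a1, a2)\<in>UNIV. \<Sum>(b1, b2, b3)\<in>UNIV. \<Sum>(c1, c2, c3)\<in>UNIV. \<Sum>(d1, d2)\<in>UNIV.
      Del x (a1, a2) * D2 Del y b1 b2 b3 * D2 Del z c1 c2 c3 * Del w (d1, d2)
      * Phi (bv b1) (bv c1) (bv d1) * Phi (bv a1) (mul (bv b2) (bv c2)) (bv d2)
      * Phi (bv a2) (bv b3) (bv c3))"
  using majid by (simp add: majid_algebra_def)

lemma Phi_Phiinv:
  "(\<Sum>(a, a')\<in>UNIV. \<Sum>(b, b')\<in>UNIV. \<Sum>(c, c')\<in>UNIV.
      Del x (a, a') * Del y (b, b') * Del z (c, c') * Phi (bv a) (bv b) (bv c) * Phiinv (bv a') (bv b') (bv c'))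
   = eps x * eps y * eps z"
  using majid by (simp add: majid_algebra_def)

lemma grading: "grading Mg"
  and Mg0: "Mg 0 = lspan G"
  and Del_homogeneous: "x \<in> Mg n \<Longrightarrow> Del x \<in> lspan (\<Union>i\<le>n. tens_sp (Mg i) (Mg (n - i)))"
  and eps_positive: "1 \<le> n \<Longrightarrow> x \<in> Mg n \<Longrightarrow> eps x = 0"
  and mul_homogeneous: "x \<in> Mg i \<Longrightarrow> y \<in> Mg j \<Longrightarrow> mul x y \<in> Mg (i + j)"
  and Phi_positive: "1 \<le> n \<Longrightarrow> x \<in> Mg n \<Longrightarrow> Phi x y z = 0 \<and> Phi y x z = 0 \<and> Phi y z x = 0"
  using graded by (simp_all add: graded_majid_def G_def)

lemma grouplike_Del: "g \<in> G \<Longrightarrow> Del g (i, j) = g i * g j"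
  and grouplike_eps: "g \<in> G \<Longrightarrow> eps g = 1"
  by (simp_all add: G_def grouplikes_def)

lemma one_grouplike: "one \<in> G"
  using Del_one eps_one by (simp add: G_def grouplikes_def)

lemma grouplike_mult: "a \<in> G \<Longrightarrow> b \<in> G \<Longrightarrow> mul a b \<in> G"
  using G_mult_closed by blast

lemma grouplike_commute: "a \<in> G \<Longrightarrow> b \<in> G \<Longrightarrow> mul a b = mul b a"
  using G_abelian by blast

lemma Phi_grouplike_normal: "a \<in> G \<Longrightarrow> b \<in> G \<Longrightarrow> Phi a one b = 1"
  by (simp add: Phi_normal grouplike_eps)

abbreviation P :: "('b \<Rightarrow> 'k) \<Rightarrow> ('b \<Rightarrow> 'k)" where
  "P \<equiv> gcomp Mg 0"

lemma P_linear: "linear_f P"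
  by (rule gcomp_linear[OF grading])

lemma P_homogeneous: "z \<in> Mg n \<Longrightarrow> P z = (if n = 0 then z else 0)"
  by (simp add: gcomp_homogeneous[OF grading])

lemma P_in_Mg0: "P x \<in> Mg 0"
  using gcomp_decomp[OF grading] by blast

lemma P_idem: "P (P x) = P x"
  using P_homogeneous[OF P_in_Mg0] by simp

lemma P_grouplike: "g \<in> G \<Longrightarrow> P g = g"
  using P_homogeneous[of g 0] lspan_base[of g G] by (simp add: Mg0)

lemma P_mul: "P (mul x y) = mul (P x) (P y)"
proof -
  have "P (mul z y) = mul (P z) (P y)" if z: "z \<in> Mg n" for z n
  proof (rule grading_linear_f_eq[OF grading linear_f_comp[OF P_linear mul_linear_right]
        linear_f_comp[OF mul_linear_right P_linear]])
    fix m w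
    assume "w \<in> Mg m"
    then show "P (mul z w) = mul (P z) (P w)"
      using P_homogeneous[OF z] P_homogeneous[OF mul_homogeneous[OF z]] P_homogeneous
        linear_f_zero[OF mul_linear_right] linear_f_zero[OF mul_linear_left] by auto
  qed
  then show ?thesis
    by (rule grading_linear_f_eq[OF grading linear_f_comp[OF P_linear mul_linear_left]
        linear_f_comp[OF mul_linear_left P_linear]])
qed

lemma eps_P: "eps x = eps (P x)"
  by (rule linear_fn_gcomp0[OF grading eps_linear eps_positive])

lemma Phi_P1: "Phi x y z = Phi (P x) y z"
  and Phi_P2: "Phi x y z = Phi x (P y) z"
  and Phi_P3: "Phi x y z = Phi x y (P z)"
  using linear_fn_gcomp0[OF grading Phi_linear1] linear_fn_gcomp0[OF grading Phi_linear2]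
    linear_fn_gcomp0[OF grading Phi_linear3] Phi_positive by blast+

subsection \<open>Elements of bidegree (h, k)\<close>

definition bideg :: "('b \<Rightarrow> 'k) \<Rightarrow> ('b \<Rightarrow> 'k) \<Rightarrow> ('b \<Rightarrow> 'k) set" where
  "bideg h k = {Y. tmap P id (Del Y) = tens2 h Y \<and> tmap id P (Del Y) = tens2 Y k}"

lemma bideg_col:
  assumes "Y \<in> bideg h k"
  shows "P (\<lambda>i. Del Y (i, c)) = smul (Y c) h"
proof (rule ext)
  fix p
  have "P (\<lambda>i. Del Y (i, c)) p = tmap P id (Del Y) (p, c)"
    by (simp only: tmap_id_right[OF P_linear])
  then show "P (\<lambda>i. Del Y (i, c)) p = smul (Y c) h p"
    using assms by (simp add: bideg_def mult.commute)
qed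

lemma bideg_row:
  assumes "Y \<in> bideg h k"
  shows "P (\<lambda>j. Del Y (c, j)) = smul (Y c) k"
proof (rule ext)
  fix q
  have "P (\<lambda>j. Del Y (c, j)) q = tmap id P (Del Y) (c, q)"
    by (simp only: tmap_id_left[OF P_linear])
  then show "P (\<lambda>j. Del Y (c, j)) q = smul (Y c) k q"
    using assms by (simp add: bideg_def)
qed

lemma bideg_subspace: "subspace_f (bideg h k)"
proof -
  have "bideg h k = {Y. tmap P id (Del Y) = tens2 h Y} \<inter> {Y. tmap id P (Del Y) = tens2 Y k}"
    by (auto simp: bideg_def)
  then show ?thesis
    by (simp only: subspace_f_Int subspace_f_equalizer linear_f_comp[OF tmap_linear Del_linear]
        tens2_linear_left tens2_linear_right)
qed

lemma bideg_smul: "Y \<in> bideg h k \<Longrightarrow> smul c Y \<in> bideg h k"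
  using bideg_subspace by (simp add: subspace_f_def)

lemma bideg_grouplike:
  assumes g: "g \<in> G"
  shows "g \<in> bideg g g"
proof -
  have "tmap P id (Del g) (p, q) = tens2 g g (p, q)" "tmap id P (Del g) (p, q) = tens2 g g (p, q)" for p q
  proof -
    have "(\<lambda>i. Del g (i, q)) = smul (g q) g" "(\<lambda>j. Del g (p, j)) = smul (g p) g"
      by (simp_all add: fun_eq_iff grouplike_Del[OF g] mult.commute)
    then show "tmap P id (Del g) (p, q) = tens2 g g (p, q)" "tmap id P (Del g) (p, q) = tens2 g g (p, q)"
      by (simp_all add: tmap_id_left[OF P_linear] tmap_id_right[OF P_linear] linear_f_smul[OF P_linear]
          P_grouplike[OF g] mult.commute)
  qed
  then show ?thesis
    by (simp add: bideg_def fun_eq_iff)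
qed

lemma bideg_coprod_eval_right:
  assumes Y: "Y \<in> bideg h k" and A: "linear_fn A" and B: "linear_fn B"
    and B_P: "\<And>v. B v = B (P v)"
  shows "(\<Sum>c\<in>UNIV. \<Sum>c'\<in>UNIV. Del Y (c, c') * (A (bv c) * B (bv c'))) = A Y * B k"
proof -
  have row: "(\<Sum>c'\<in>UNIV. Del Y (c, c') * B (bv c')) = Y c * B k" for c
  proof -
    have "(\<Sum>c'\<in>UNIV. Del Y (c, c') * B (bv c')) = B (P (\<lambda>c'. Del Y (c, c')))"
      by (simp only: linear_fn_coords[OF B] B_P[symmetric])
    then show ?thesis
      by (simp only: bideg_row[OF Y] linear_fn_smul[OF B])
  qed
  have "(\<Sum>c\<in>UNIV. \<Sum>c'\<in>UNIV. Del Y (c, c') * (A (bv c) * B (bv c')))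
      = (\<Sum>c\<in>UNIV. A (bv c) * (\<Sum>c'\<in>UNIV. Del Y (c, c') * B (bv c')))"
    by (simp add: sum_distrib_left ac_simps)
  also have "\<dots> = (\<Sum>c\<in>UNIV. A (bv c) * (Y c * B k))"
    by (simp only: row)
  also have "\<dots> = (\<Sum>c\<in>UNIV. Y c * A (bv c)) * B k"
    by (subst sum_distrib_right) (simp only: mult_ac)
  finally show ?thesis
    by (simp only: linear_fn_coords[OF A])
qed

lemma bideg_coprod_eval_left:
  assumes Y: "Y \<in> bideg h k" and A: "linear_fn A" and B: "linear_fn B"
    and A_P: "\<And>u. A u = A (P u)"
  shows "(\<Sum>c\<in>UNIV. \<Sum>c'\<in>UNIV. Del Y (c, c') * (A (bv c) * B (bv c'))) = A h * B Y"
proof -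
  have col: "(\<Sum>c\<in>UNIV. Del Y (c, c') * A (bv c)) = Y c' * A h" for c'
  proof -
    have "(\<Sum>c\<in>UNIV. Del Y (c, c') * A (bv c)) = A (P (\<lambda>c. Del Y (c, c')))"
      by (simp only: linear_fn_coords[OF A] A_P[symmetric])
    then show ?thesis
      by (simp only: bideg_col[OF Y] linear_fn_smul[OF A])
  qed
  have "(\<Sum>c\<in>UNIV. \<Sum>c'\<in>UNIV. Del Y (c, c') * (A (bv c) * B (bv c')))
      = (\<Sum>c'\<in>UNIV. B (bv c') * (\<Sum>c\<in>UNIV. Del Y (c, c') * A (bv c)))"
    by (subst sum.swap) (simp add: sum_distrib_left ac_simps)
  also have "\<dots> = (\<Sum>c'\<in>UNIV. B (bv c') * (Y c' * A h))"
    by (simp only: col)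
  also have "\<dots> = A h * (\<Sum>c'\<in>UNIV. Y c' * B (bv c'))"
    by (subst sum_distrib_left) (simp only: mult_ac)
  finally show ?thesis
    by (simp only: linear_fn_coords[OF B])
qed

lemma grouplike_coprod_eval:
  assumes g: "g \<in> G" and A: "linear_fn A" and B: "linear_fn B"
  shows "(\<Sum>a\<in>UNIV. \<Sum>a'\<in>UNIV. Del g (a, a') * (A (bv a) * B (bv a'))) = A g * B g"
proof -
  have "(\<Sum>a\<in>UNIV. \<Sum>a'\<in>UNIV. Del g (a, a') * (A (bv a) * B (bv a')))
      = (\<Sum>a\<in>UNIV. \<Sum>a'\<in>UNIV. (g a * A (bv a)) * (g a' * B (bv a')))"
    by (simp add: grouplike_Del[OF g] ac_simps)
  also have "\<dots> = (\<Sum>a\<in>UNIV. g a * A (bv a)) * (\<Sum>a'\<in>UNIV. g a' * B (bv a'))"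
    by (rule sum_product[symmetric])
  finally show ?thesis
    by (simp only: linear_fn_coords[OF A] linear_fn_coords[OF B])
qed

lemma grouplike_D2:
  assumes g: "g \<in> G"
  shows "D2 Del g i j l = g i * g j * g l"
proof -
  have "D2 Del g i j l = g l * (\<Sum>m\<in>UNIV. g m * Del (bv m) (i, j))"
    unfolding D2_def by (simp only: grouplike_Del[OF g] sum_distrib_left mult_ac)
  also have "\<dots> = g i * g j * g l"
    by (simp only: linear_f_coords[OF Del_linear] grouplike_Del[OF g] mult_ac)
  finally show ?thesis .
qed

lemma grouplike_coprod3_eval:
  assumes g: "g \<in> G" and A: "linear_fn A" and B: "linear_fn B" and C: "linear_fn C"
  shows "(\<Sum>i\<in>UNIV. \<Sum>j\<in>UNIV. \<Sum>l\<in>UNIV. D2 Del g i j l * (A (bv i) * (B (bv j) * C (bv l))))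
    = A g * (B g * C g)"
proof -
  have "(\<Sum>i\<in>UNIV. \<Sum>j\<in>UNIV. \<Sum>l\<in>UNIV. D2 Del g i j l * (A (bv i) * (B (bv j) * C (bv l))))
      = (\<Sum>i\<in>UNIV. g i * A (bv i) * (\<Sum>j\<in>UNIV. g j * B (bv j) * (\<Sum>l\<in>UNIV. g l * C (bv l))))"
    by (simp add: grouplike_D2[OF g] sum_distrib_left ac_simps)
  also have "\<dots> = (\<Sum>i\<in>UNIV. g i * A (bv i) * (B g * C g))"
    by (simp only: linear_fn_coords[OF C] sum_distrib_right[symmetric] linear_fn_coords[OF B])
  also have "\<dots> = A g * (B g * C g)"
    by (simp only: sum_distrib_right[symmetric] linear_fn_coords[OF A])
  finally show ?thesis .
qed

lemma bideg_quasi_assoc_left: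
  assumes x: "x \<in> bideg h1 k1" and y: "y \<in> bideg h2 k2" and z: "z \<in> bideg h3 k3"
  shows "(\<Sum>(a, a')\<in>UNIV. \<Sum>(b, b')\<in>UNIV. \<Sum>(c, c')\<in>UNIV.
      smul (Del x (a, a') * Del y (b, b') * Del z (c, c') * Phi (bv a') (bv b') (bv c'))
           (mul (bv a) (mul (bv b) (bv c))))
    = smul (Phi k1 k2 k3) (mul x (mul y z))"
proof (rule ext)
  fix r
  have peel: "(\<Sum>c\<in>UNIV. \<Sum>c'\<in>UNIV. Del z (c, c')
        * (mul (bv a) (mul (bv b) (bv c)) r * Phi (bv a') (bv b') (bv c')))
      = mul (bv a) (mul (bv b) z) r * Phi (bv a') (bv b') k3"
    "(\<Sum>b\<in>UNIV. \<Sum>b'\<in>UNIV. Del y (b, b') * (mul (bv a) (mul (bv b) z) r * Phi (bv a') (bv b') k3))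
      = mul (bv a) (mul y z) r * Phi (bv a') k2 k3"
    "(\<Sum>a\<in>UNIV. \<Sum>a'\<in>UNIV. Del x (a, a') * (mul (bv a) (mul y z) r * Phi (bv a') k2 k3))
      = mul x (mul y z) r * Phi k1 k2 k3" for a a' b b'
    by (rule bideg_coprod_eval_right[where B="Phi (bv a') (bv b')", OF z
          linear_fn_apply[OF linear_f_comp[OF mul_linear_right mul_linear_right]] Phi_linear3 Phi_P3],
        rule bideg_coprod_eval_right[where B="\<lambda>v. Phi (bv a') v k3", OF y
          linear_fn_apply[OF linear_f_comp[OF mul_linear_right mul_linear_left]] Phi_linear2 Phi_P2],
        rule bideg_coprod_eval_right[where B="\<lambda>v. Phi v k2 k3", OF x
          linear_fn_apply[OF mul_linear_left] Phi_linear1 Phi_P1])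
  have "(\<Sum>(a, a')\<in>UNIV. \<Sum>(b, b')\<in>UNIV. \<Sum>(c, c')\<in>UNIV.
      smul (Del x (a, a') * Del y (b, b') * Del z (c, c') * Phi (bv a') (bv b') (bv c'))
           (mul (bv a) (mul (bv b) (bv c)))) r
    = (\<Sum>a\<in>UNIV. \<Sum>a'\<in>UNIV. Del x (a, a') * (\<Sum>b\<in>UNIV. \<Sum>b'\<in>UNIV. Del y (b, b')
        * (\<Sum>c\<in>UNIV. \<Sum>c'\<in>UNIV. Del z (c, c')
        * (mul (bv a) (mul (bv b) (bv c)) r * Phi (bv a') (bv b') (bv c')))))"
    by (simp only: sum_pair) (simp only: sum_apply smul_apply sum_distrib_left mult_ac)
  also have "\<dots> = mul x (mul y z) r * Phi k1 k2 k3"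
    by (simp only: peel)
  finally show "(\<Sum>(a, a')\<in>UNIV. \<Sum>(b, b')\<in>UNIV. \<Sum>(c, c')\<in>UNIV.
      smul (Del x (a, a') * Del y (b, b') * Del z (c, c') * Phi (bv a') (bv b') (bv c'))
           (mul (bv a) (mul (bv b) (bv c)))) r = smul (Phi k1 k2 k3) (mul x (mul y z)) r"
    by (simp add: mult.commute)
qed

lemma bideg_quasi_assoc_right:
  assumes x: "x \<in> bideg h1 k1" and y: "y \<in> bideg h2 k2" and z: "z \<in> bideg h3 k3"
  shows "(\<Sum>(a, a')\<in>UNIV. \<Sum>(b, b')\<in>UNIV. \<Sum>(c, c')\<in>UNIV.
      smul (Del x (a, a') * Del y (b, b') * Del z (c, c') * Phi (bv a) (bv b) (bv c))
           (mul (mul (bv a') (bv b')) (bv c')))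
    = smul (Phi h1 h2 h3) (mul (mul x y) z)"
proof (rule ext)
  fix r
  have peel: "(\<Sum>c\<in>UNIV. \<Sum>c'\<in>UNIV. Del z (c, c')
        * (Phi (bv a) (bv b) (bv c) * mul (mul (bv a') (bv b')) (bv c') r))
      = Phi (bv a) (bv b) h3 * mul (mul (bv a') (bv b')) z r"
    "(\<Sum>b\<in>UNIV. \<Sum>b'\<in>UNIV. Del y (b, b') * (Phi (bv a) (bv b) h3 * mul (mul (bv a') (bv b')) z r))
      = Phi (bv a) h2 h3 * mul (mul (bv a') y) z r"
    "(\<Sum>a\<in>UNIV. \<Sum>a'\<in>UNIV. Del x (a, a') * (Phi (bv a) h2 h3 * mul (mul (bv a') y) z r))
      = Phi h1 h2 h3 * mul (mul x y) z r" for a a' b b'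
    by (rule bideg_coprod_eval_left[where A="Phi (bv a) (bv b)", OF z
          Phi_linear3 linear_fn_apply[OF mul_linear_right] Phi_P3],
        rule bideg_coprod_eval_left[where A="\<lambda>u. Phi (bv a) u h3", OF y
          Phi_linear2 linear_fn_apply[OF linear_f_comp[OF mul_linear_left mul_linear_right]] Phi_P2],
        rule bideg_coprod_eval_left[where A="\<lambda>u. Phi u h2 h3", OF x
          Phi_linear1 linear_fn_apply[OF linear_f_comp[OF mul_linear_left mul_linear_left]] Phi_P1])
  have "(\<Sum>(a, a')\<in>UNIV. \<Sum>(b, b')\<in>UNIV. \<Sum>(c, c')\<in>UNIV.
      smul (Del x (a, a') * Del y (b, b') * Del z (c, c') * Phi (bv a) (bv b) (bv c))
           (mul (mul (bv a') (bv b')) (bv c'))) r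
    = (\<Sum>a\<in>UNIV. \<Sum>a'\<in>UNIV. Del x (a, a') * (\<Sum>b\<in>UNIV. \<Sum>b'\<in>UNIV. Del y (b, b')
        * (\<Sum>c\<in>UNIV. \<Sum>c'\<in>UNIV. Del z (c, c')
        * (Phi (bv a) (bv b) (bv c) * mul (mul (bv a') (bv b')) (bv c') r))))"
    by (simp only: sum_pair) (simp only: sum_apply smul_apply sum_distrib_left mult_ac)
  also have "\<dots> = Phi h1 h2 h3 * mul (mul x y) z r"
    by (simp only: peel)
  finally show "(\<Sum>(a, a')\<in>UNIV. \<Sum>(b, b')\<in>UNIV. \<Sum>(c, c')\<in>UNIV.
      smul (Del x (a, a') * Del y (b, b') * Del z (c, c') * Phi (bv a) (bv b) (bv c))
           (mul (mul (bv a') (bv b')) (bv c'))) r = smul (Phi h1 h2 h3) (mul (mul x y) z) r"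
    by simp
qed

lemma bideg_quasi_assoc:
  assumes "x \<in> bideg h1 k1" "y \<in> bideg h2 k2" "z \<in> bideg h3 k3"
  shows "smul (Phi k1 k2 k3) (mul x (mul y z)) = smul (Phi h1 h2 h3) (mul (mul x y) z)"
  using quasi_assoc[of x y z] by (simp only: bideg_quasi_assoc_left[OF assms] bideg_quasi_assoc_right[OF assms])

subsection \<open>The associator on group-likes\<close>

lemma Phi_Phiinv_grouplike:
  assumes a: "a \<in> G" and b: "b \<in> G" and c: "c \<in> G"
  shows "Phi a b c * Phiinv a b c = 1"
proof -
  have peel: "(\<Sum>c1\<in>UNIV. \<Sum>c2\<in>UNIV. Del c (c1, c2)
        * (Phi (bv a1) (bv b1) (bv c1) * Phiinv (bv a2) (bv b2) (bv c2)))
      = Phi (bv a1) (bv b1) c * Phiinv (bv a2) (bv b2) c"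
    "(\<Sum>b1\<in>UNIV. \<Sum>b2\<in>UNIV. Del b (b1, b2) * (Phi (bv a1) (bv b1) c * Phiinv (bv a2) (bv b2) c))
      = Phi (bv a1) b c * Phiinv (bv a2) b c"
    "(\<Sum>a1\<in>UNIV. \<Sum>a2\<in>UNIV. Del a (a1, a2) * (Phi (bv a1) b c * Phiinv (bv a2) b c))
      = Phi a b c * Phiinv a b c" for a1 a2 b1 b2
    by (rule grouplike_coprod_eval[OF c Phi_linear3 Phiinv_linear3],
        rule grouplike_coprod_eval[OF b Phi_linear2 Phiinv_linear2],
        rule grouplike_coprod_eval[OF a Phi_linear1 Phiinv_linear1])
  have "Phi a b c * Phiinv a b c
      = (\<Sum>a1\<in>UNIV. \<Sum>a2\<in>UNIV. Del a (a1, a2) * (\<Sum>b1\<in>UNIV. \<Sum>b2\<in>UNIV. Del b (b1, b2)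
          * (\<Sum>c1\<in>UNIV. \<Sum>c2\<in>UNIV. Del c (c1, c2)
          * (Phi (bv a1) (bv b1) (bv c1) * Phiinv (bv a2) (bv b2) (bv c2)))))"
    by (simp only: peel)
  also have "\<dots> = eps a * eps b * eps c"
    using Phi_Phiinv[of a b c] by (simp only: sum_pair sum_distrib_left mult_ac)
  finally show ?thesis
    by (simp add: grouplike_eps a b c)
qed

lemma Phi_grouplike_nonzero: "a \<in> G \<Longrightarrow> b \<in> G \<Longrightarrow> c \<in> G \<Longrightarrow> Phi a b c \<noteq> 0"
  using Phi_Phiinv_grouplike by fastforce

lemma cocycle_left_grouplike:
  assumes x: "x \<in> G" and y: "y \<in> G" and z: "z \<in> G" and w: "w \<in> G"
  shows "(\<Sum>(a1, a2)\<in>UNIV. \<Sum>(b1, b2)\<in>UNIV. \<Sum>(c1, c2)\<in>UNIV. \<Sum>(d1, d2)\<in>UNIV.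
      Del x (a1, a2) * Del y (b1, b2) * Del z (c1, c2) * Del w (d1, d2)
      * Phi (bv a1) (bv b1) (mul (bv c1) (bv d1)) * Phi (mul (bv a2) (bv b2)) (bv c2) (bv d2))
    = Phi x y (mul z w) * Phi (mul x y) z w"
proof -
  have peel: "(\<Sum>d1\<in>UNIV. \<Sum>d2\<in>UNIV. Del w (d1, d2)
        * (Phi (bv a1) (bv b1) (mul (bv c1) (bv d1)) * Phi (mul (bv a2) (bv b2)) (bv c2) (bv d2)))
      = Phi (bv a1) (bv b1) (mul (bv c1) w) * Phi (mul (bv a2) (bv b2)) (bv c2) w"
    "(\<Sum>c1\<in>UNIV. \<Sum>c2\<in>UNIV. Del z (c1, c2)
        * (Phi (bv a1) (bv b1) (mul (bv c1) w) * Phi (mul (bv a2) (bv b2)) (bv c2) w))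
      = Phi (bv a1) (bv b1) (mul z w) * Phi (mul (bv a2) (bv b2)) z w"
    "(\<Sum>b1\<in>UNIV. \<Sum>b2\<in>UNIV. Del y (b1, b2)
        * (Phi (bv a1) (bv b1) (mul z w) * Phi (mul (bv a2) (bv b2)) z w))
      = Phi (bv a1) y (mul z w) * Phi (mul (bv a2) y) z w"
    "(\<Sum>a1\<in>UNIV. \<Sum>a2\<in>UNIV. Del x (a1, a2) * (Phi (bv a1) y (mul z w) * Phi (mul (bv a2) y) z w))
      = Phi x y (mul z w) * Phi (mul x y) z w" for a1 a2 b1 b2 c1 c2
    by (rule grouplike_coprod_eval[OF w linear_fn_comp[OF Phi_linear3 mul_linear_right] Phi_linear3],
        rule grouplike_coprod_eval[OF z linear_fn_comp[OF Phi_linear3 mul_linear_left] Phi_linear2],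
        rule grouplike_coprod_eval[OF y Phi_linear2 linear_fn_comp[OF Phi_linear1 mul_linear_right]],
        rule grouplike_coprod_eval[OF x Phi_linear1 linear_fn_comp[OF Phi_linear1 mul_linear_left]])
  have "(\<Sum>(a1, a2)\<in>UNIV. \<Sum>(b1, b2)\<in>UNIV. \<Sum>(c1, c2)\<in>UNIV. \<Sum>(d1, d2)\<in>UNIV.
      Del x (a1, a2) * Del y (b1, b2) * Del z (c1, c2) * Del w (d1, d2)
      * Phi (bv a1) (bv b1) (mul (bv c1) (bv d1)) * Phi (mul (bv a2) (bv b2)) (bv c2) (bv d2))
    = (\<Sum>a1\<in>UNIV. \<Sum>a2\<in>UNIV. Del x (a1, a2) * (\<Sum>b1\<in>UNIV. \<Sum>b2\<in>UNIV. Del y (b1, b2)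
        * (\<Sum>c1\<in>UNIV. \<Sum>c2\<in>UNIV. Del z (c1, c2) * (\<Sum>d1\<in>UNIV. \<Sum>d2\<in>UNIV. Del w (d1, d2)
        * (Phi (bv a1) (bv b1) (mul (bv c1) (bv d1)) * Phi (mul (bv a2) (bv b2)) (bv c2) (bv d2))))))"
    by (simp only: sum_pair sum_distrib_left mult_ac)
  then show ?thesis
    by (simp only: peel)
qed

lemma cocycle_right_grouplike:
  assumes x: "x \<in> G" and y: "y \<in> G" and z: "z \<in> G" and w: "w \<in> G"
  shows "(\<Sum>(a1, a2)\<in>UNIV. \<Sum>(b1, b2, b3)\<in>UNIV. \<Sum>(c1, c2, c3)\<in>UNIV. \<Sum>(d1, d2)\<in>UNIV.
      Del x (a1, a2) * D2 Del y b1 b2 b3 * D2 Del z c1 c2 c3 * Del w (d1, d2)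
      * Phi (bv b1) (bv c1) (bv d1) * Phi (bv a1) (mul (bv b2) (bv c2)) (bv d2)
      * Phi (bv a2) (bv b3) (bv c3))
    = Phi y z w * Phi x (mul y z) w * Phi x y z"
proof -
  have peel: "(\<Sum>d1\<in>UNIV. \<Sum>d2\<in>UNIV. Del w (d1, d2) * (Phi (bv b1) (bv c1) (bv d1)
        * (Phi (bv a1) (mul (bv b2) (bv c2)) (bv d2) * Phi (bv a2) (bv b3) (bv c3))))
      = Phi (bv b1) (bv c1) w * (Phi (bv a1) (mul (bv b2) (bv c2)) w * Phi (bv a2) (bv b3) (bv c3))"
    "(\<Sum>c1\<in>UNIV. \<Sum>c2\<in>UNIV. \<Sum>c3\<in>UNIV. D2 Del z c1 c2 c3 * (Phi (bv b1) (bv c1) w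
        * (Phi (bv a1) (mul (bv b2) (bv c2)) w * Phi (bv a2) (bv b3) (bv c3))))
      = Phi (bv b1) z w * (Phi (bv a1) (mul (bv b2) z) w * Phi (bv a2) (bv b3) z)"
    "(\<Sum>b1\<in>UNIV. \<Sum>b2\<in>UNIV. \<Sum>b3\<in>UNIV. D2 Del y b1 b2 b3 * (Phi (bv b1) z w
        * (Phi (bv a1) (mul (bv b2) z) w * Phi (bv a2) (bv b3) z)))
      = Phi y z w * (Phi (bv a1) (mul y z) w * Phi (bv a2) y z)"
    "(\<Sum>a1\<in>UNIV. \<Sum>a2\<in>UNIV. Del x (a1, a2) * (Phi (bv a1) (mul y z) w * Phi (bv a2) y z))
      = Phi x (mul y z) w * Phi x y z" for a1 a2 b1 b2 b3 c1 c2 c3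
    by (rule grouplike_coprod_eval[OF w Phi_linear3 linear_fn_mult_right[OF Phi_linear3]],
        rule grouplike_coprod3_eval[OF z Phi_linear2 linear_fn_comp[OF Phi_linear2 mul_linear_right] Phi_linear3],
        rule grouplike_coprod3_eval[OF y Phi_linear1 linear_fn_comp[OF Phi_linear2 mul_linear_left] Phi_linear2],
        rule grouplike_coprod_eval[OF x Phi_linear1 Phi_linear1])
  have "(\<Sum>(a1, a2)\<in>UNIV. \<Sum>(b1, b2, b3)\<in>UNIV. \<Sum>(c1, c2, c3)\<in>UNIV. \<Sum>(d1, d2)\<in>UNIV.
      Del x (a1, a2) * D2 Del y b1 b2 b3 * D2 Del z c1 c2 c3 * Del w (d1, d2)
      * Phi (bv b1) (bv c1) (bv d1) * Phi (bv a1) (mul (bv b2) (bv c2)) (bv d2)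
      * Phi (bv a2) (bv b3) (bv c3))
    = (\<Sum>a1\<in>UNIV. \<Sum>a2\<in>UNIV. Del x (a1, a2) * (\<Sum>b1\<in>UNIV. \<Sum>b2\<in>UNIV. \<Sum>b3\<in>UNIV.
        D2 Del y b1 b2 b3 * (\<Sum>c1\<in>UNIV. \<Sum>c2\<in>UNIV. \<Sum>c3\<in>UNIV. D2 Del z c1 c2 c3
        * (\<Sum>d1\<in>UNIV. \<Sum>d2\<in>UNIV. Del w (d1, d2) * (Phi (bv b1) (bv c1) (bv d1)
        * (Phi (bv a1) (mul (bv b2) (bv c2)) (bv d2) * Phi (bv a2) (bv b3) (bv c3)))))))"
    by (simp only: sum_pair sum_triple sum_distrib_left mult_ac)
  also have "\<dots> = Phi y z w * (\<Sum>a1\<in>UNIV. \<Sum>a2\<in>UNIV. Del x (a1, a2)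
      * (Phi (bv a1) (mul y z) w * Phi (bv a2) y z))"
    by (simp only: peel(1-3) sum_distrib_left mult.left_commute[of "Del x _"])
  finally show ?thesis
    by (simp only: peel(4) mult.assoc)
qed

lemma cocycle_grouplike:
  assumes "x \<in> G" "y \<in> G" "z \<in> G" "w \<in> G"
  shows "Phi x y (mul z w) * Phi (mul x y) z w = Phi y z w * Phi x (mul y z) w * Phi x y z"
  using cocycle[of x y z w] by (simp only: cocycle_left_grouplike[OF assms] cocycle_right_grouplike[OF assms])

lemma Phi_grouplike_unit_right:
  assumes a: "a \<in> G" and b: "b \<in> G"
  shows "Phi a b one = 1"
proof -
  have "Phi a b one * 1 = 1 * Phi a b one * Phi a b one"
    using cocycle_grouplike[OF a b one_grouplike one_grouplike]
    by (simp add: Phi_grouplike_normal grouplike_mult a b one_grouplike)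
  then show ?thesis
    using Phi_grouplike_nonzero[OF a b one_grouplike] by simp
qed

lemma Phi_grouplike_unit_left:
  assumes a: "a \<in> G" and b: "b \<in> G"
  shows "Phi one a b = 1"
proof -
  have "1 * Phi one a b = Phi one a b * Phi one a b * 1"
    using cocycle_grouplike[OF one_grouplike one_grouplike a b]
    by (simp add: Phi_grouplike_normal grouplike_mult a b one_grouplike)
  then show ?thesis
    using Phi_grouplike_nonzero[OF one_grouplike a b] by simp
qed

lemma grouplike_assoc:
  assumes a: "a \<in> G" and b: "b \<in> G" and c: "c \<in> G"
  shows "mul a (mul b c) = mul (mul a b) c"
proof -
  have "smul (Phi a b c) (mul a (mul b c)) = smul (Phi a b c) (mul (mul a b) c)"
    by (rule bideg_quasi_assoc[OF bideg_grouplike[OF a] bideg_grouplike[OF b] bideg_grouplike[OF c]])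
  then show ?thesis
    using Phi_grouplike_nonzero[OF a b c] by (simp add: fun_eq_iff)
qed

lemma bideg_image_left:
  assumes Y: "Y \<in> bideg h k" and L: "linear_f L" and L_P: "\<And>v. P (L v) = L (P v)"
    and Del_L: "\<And>i j. Del (L Y) (i, j) = (\<Sum>b\<in>UNIV. \<Sum>b'\<in>UNIV. Del Y (b, b') * (L (bv b) i * L (bv b') j))"
  shows "tmap P id (Del (L Y)) (p, q) = tens2 (L h) (L Y) (p, q)"
proof -
  have col: "(\<lambda>i. Del (L Y) (i, q)) = (\<Sum>b'\<in>UNIV. smul (L (bv b') q) (L (\<lambda>b. Del Y (b, b'))))"
  proof (rule ext)
    fix i
    have "Del (L Y) (i, q) = (\<Sum>b'\<in>UNIV. L (bv b') q * (\<Sum>b\<in>UNIV. Del Y (b, b') * L (bv b) i))"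
      by (subst Del_L, subst sum.swap) (simp only: sum_distrib_left mult_ac)
    then show "Del (L Y) (i, q) = (\<Sum>b'\<in>UNIV. smul (L (bv b') q) (L (\<lambda>b. Del Y (b, b')))) i"
      by (simp only: linear_f_coords[OF L] sum_apply smul_apply)
  qed
  have "tmap P id (Del (L Y)) (p, q) = (\<Sum>b'\<in>UNIV. L (bv b') q * L (P (\<lambda>b. Del Y (b, b'))) p)"
    by (simp only: tmap_id_right[OF P_linear] col linear_f_sum[OF P_linear] linear_f_smul[OF P_linear]
        L_P sum_apply smul_apply)
  also have "\<dots> = (\<Sum>b'\<in>UNIV. Y b' * L (bv b') q) * L h p"
    by (simp only: bideg_col[OF Y] linear_f_smul[OF L] smul_apply sum_distrib_left sum_distrib_right
        mult_ac)
  finally show ?thesis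
    by (simp only: linear_f_coords[OF L] tens2_apply mult.commute)
qed

lemma bideg_image_right:
  assumes Y: "Y \<in> bideg h k" and L: "linear_f L" and L_P: "\<And>v. P (L v) = L (P v)"
    and Del_L: "\<And>i j. Del (L Y) (i, j) = (\<Sum>b\<in>UNIV. \<Sum>b'\<in>UNIV. Del Y (b, b') * (L (bv b) i * L (bv b') j))"
  shows "tmap id P (Del (L Y)) (p, q) = tens2 (L Y) (L k) (p, q)"
proof -
  have row: "(\<lambda>j. Del (L Y) (p, j)) = (\<Sum>b\<in>UNIV. smul (L (bv b) p) (L (\<lambda>b'. Del Y (b, b'))))"
  proof (rule ext)
    fix j
    have "Del (L Y) (p, j) = (\<Sum>b\<in>UNIV. L (bv b) p * (\<Sum>b'\<in>UNIV. Del Y (b, b') * L (bv b') j))"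
      by (simp only: Del_L sum_distrib_left mult_ac)
    then show "Del (L Y) (p, j) = (\<Sum>b\<in>UNIV. smul (L (bv b) p) (L (\<lambda>b'. Del Y (b, b')))) j"
      by (simp only: linear_f_coords[OF L] sum_apply smul_apply)
  qed
  have "tmap id P (Del (L Y)) (p, q) = (\<Sum>b\<in>UNIV. L (bv b) p * L (P (\<lambda>b'. Del Y (b, b'))) q)"
    by (simp only: tmap_id_left[OF P_linear] row linear_f_sum[OF P_linear] linear_f_smul[OF P_linear]
        L_P sum_apply smul_apply)
  also have "\<dots> = (\<Sum>b\<in>UNIV. Y b * L (bv b) p) * L k q"
    by (simp only: bideg_row[OF Y] linear_f_smul[OF L] smul_apply sum_distrib_left sum_distrib_right
        mult_ac)
  finally show ?thesis
    by (simp only: linear_f_coords[OF L] tens2_apply)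
qed

lemma bideg_image:
  assumes "Y \<in> bideg h k" "linear_f L" "\<And>v. P (L v) = L (P v)"
    "\<And>i j. Del (L Y) (i, j) = (\<Sum>b\<in>UNIV. \<Sum>b'\<in>UNIV. Del Y (b, b') * (L (bv b) i * L (bv b') j))"
  shows "L Y \<in> bideg (L h) (L k)"
  using bideg_image_left[OF assms] bideg_image_right[OF assms] by (simp add: bideg_def fun_eq_iff)

lemma Del_mult_grouplike_left:
  assumes f: "f \<in> G"
  shows "Del (mul f Y) (i, j) = (\<Sum>b\<in>UNIV. \<Sum>b'\<in>UNIV. Del Y (b, b') * (mul f (bv b) i * mul f (bv b') j))"
proof -
  have "Del (mul f Y) (i, j) = (\<Sum>(b, b')\<in>UNIV. \<Sum>(a, a')\<in>UNIV.
      Del f (a, a') * Del Y (b, b') * mul (bv a) (bv b) i * mul (bv a') (bv b') j)"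
    by (simp only: Del_mul) (rule sum_pair_swap)
  also have "\<dots> = (\<Sum>b\<in>UNIV. \<Sum>b'\<in>UNIV. Del Y (b, b')
      * (\<Sum>a\<in>UNIV. \<Sum>a'\<in>UNIV. Del f (a, a') * (mul (bv a) (bv b) i * mul (bv a') (bv b') j)))"
    by (simp only: sum_pair sum_distrib_left mult_ac)
  finally show ?thesis
    by (simp only: grouplike_coprod_eval[OF f linear_fn_apply[OF mul_linear_left] linear_fn_apply[OF mul_linear_left]])
qed

lemma Del_mult_grouplike_right:
  assumes f: "f \<in> G"
  shows "Del (mul Y f) (i, j) = (\<Sum>b\<in>UNIV. \<Sum>b'\<in>UNIV. Del Y (b, b') * (mul (bv b) f i * mul (bv b') f j))"
proof -
  have "Del (mul Y f) (i, j) = (\<Sum>b\<in>UNIV. \<Sum>b'\<in>UNIV. Del Y (b, b')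
      * (\<Sum>a\<in>UNIV. \<Sum>a'\<in>UNIV. Del f (a, a') * (mul (bv b) (bv a) i * mul (bv b') (bv a') j)))"
    by (simp only: Del_mul sum_pair sum_distrib_left mult_ac)
  then show ?thesis
    by (simp only: grouplike_coprod_eval[OF f linear_fn_apply[OF mul_linear_right] linear_fn_apply[OF mul_linear_right]])
qed

lemma bideg_mult_left:
  assumes f: "f \<in> G" and Y: "Y \<in> bideg h k"
  shows "mul f Y \<in> bideg (mul f h) (mul f k)"
  by (rule bideg_image[OF Y mul_linear_right _ Del_mult_grouplike_left[OF f]])
    (simp only: P_mul P_grouplike[OF f])

lemma bideg_mult_right:
  assumes f: "f \<in> G" and Y: "Y \<in> bideg h k"
  shows "mul Y f \<in> bideg (mul h f) (mul k f)"
  by (rule bideg_image[OF Y mul_linear_left _ Del_mult_grouplike_right[OF f]])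
    (simp only: P_mul P_grouplike[OF f])

lemma ginv_eq:
  assumes f: "f \<in> G" and h: "h \<in> G" "mul f h = one"
  shows "ginv mul one G f = h"
  unfolding ginv_def
proof (rule the_equality)
  fix h'
  assume h': "h' \<in> G \<and> mul f h' = one"
  have "mul h f = one"
    using grouplike_commute[OF f h(1)] h(2) by simp
  then have "h' = mul (mul h f) h'"
    by simp
  also have "\<dots> = mul h (mul f h')"
    using grouplike_assoc[OF h(1) f, of h'] h' by simp
  also have "\<dots> = h"
    using h' by simp
  finally show "h' = h" .
qed (use h in blast)

lemma ginv_grouplike: "f \<in> G \<Longrightarrow> ginv mul one G f \<in> G"
  and mul_ginv: "f \<in> G \<Longrightarrow> mul f (ginv mul one G f) = one"
  and ginv_mul: "f \<in> G \<Longrightarrow> mul (ginv mul one G f) f = one"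
  using G_inverse ginv_eq by metis+

lemma ginv_one: "ginv mul one G one = one"
  by (rule ginv_eq[OF one_grouplike one_grouplike]) simp

subsection \<open>The action on R_g\<close>

lemma Rg_eq_bideg: "Rg Del P one g = bideg g one"
  by (simp add: Rg_def bideg_def)

lemma gact_bideg:
  assumes g: "g \<in> G" and f: "f \<in> G" and X: "X \<in> bideg g one"
  shows "gact mul one Phi G g f X \<in> bideg g one"
proof -
  let ?f' = "ginv mul one G f"
  have "mul (mul f X) ?f' \<in> bideg (mul (mul f g) ?f') (mul (mul f one) ?f')"
    by (rule bideg_mult_right[OF ginv_grouplike[OF f] bideg_mult_left[OF f X]])
  moreover have "mul (mul f g) ?f' = g"
    using grouplike_assoc[OF g f ginv_grouplike[OF f]] grouplike_commute[OF f g] mul_ginv[OF f] by simp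
  ultimately show ?thesis
    unfolding gact_def using mul_ginv[OF f] by (simp add: bideg_smul)
qed

lemma gact_mult_right:
  assumes g: "g \<in> G" and f: "f \<in> G" and X: "X \<in> bideg g one"
  shows "mul (gact mul one Phi G g f X) f = mul f X"
proof -
  let ?f' = "ginv mul one G f"
  have f': "?f' \<in> G"
    by (rule ginv_grouplike[OF f])
  have "smul (Phi (mul f g) ?f' f) (mul (mul (mul f X) ?f') f) = smul (Phi f ?f' f) (mul f X)"
    using bideg_quasi_assoc[OF bideg_mult_left[OF f X] bideg_grouplike[OF f'] bideg_grouplike[OF f]]
      ginv_mul[OF f] by simp
  then have "mul (mul (mul f X) ?f') f = smul (Phi f ?f' f / Phi (mul f g) ?f' f) (mul f X)"
    by (rule smul_eq_smulD[OF Phi_grouplike_nonzero[OF grouplike_mult[OF f g] f' f]])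
  then show ?thesis
    unfolding gact_def
    using Phi_grouplike_nonzero[OF f f' f] Phi_grouplike_nonzero[OF grouplike_mult[OF f g] f' f]
    by (simp add: linear_f_smul[OF mul_linear_left] smul_smul)
qed

lemma bideg_mult_right_cancel:
  assumes f: "f \<in> G" and k: "k \<in> G" and Y: "Y \<in> bideg h k" and Z: "Z \<in> bideg h k"
    and eq: "mul Y f = mul Z f"
  shows "Y = Z"
proof -
  let ?f' = "ginv mul one G f"
  have "smul (Phi k f ?f') W = smul (Phi h f ?f') (mul (mul W f) ?f')" if "W \<in> bideg h k" for W
    using bideg_quasi_assoc[OF that bideg_grouplike[OF f] bideg_grouplike[OF ginv_grouplike[OF f]]]
      mul_ginv[OF f] by simp
  then have "smul (Phi k f ?f') Y = smul (Phi k f ?f') Z"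
    using Y Z eq by simp
  then show ?thesis
    using Phi_grouplike_nonzero[OF k f ginv_grouplike[OF f]] by (simp add: fun_eq_iff)
qed

lemma gact_one: "g \<in> G \<Longrightarrow> gact mul one Phi G g one X = X"
  by (simp add: gact_def ginv_one Phi_grouplike_normal one_grouplike)

lemma gact_comp:
  assumes g: "g \<in> G" and e: "e \<in> G" and f: "f \<in> G" and X: "X \<in> bideg g one"
  shows "gact mul one Phi G g e (gact mul one Phi G g f X)
    = smul (Phitilde Phi g e f) (gact mul one Phi G g (mul e f) X)"
proof (rule bideg_mult_right_cancel[OF grouplike_mult[OF e f] one_grouplike])
  let ?act = "gact mul one Phi G g"
  have fX: "?act f X \<in> bideg g one"
    by (rule gact_bideg[OF g f X])
  show "?act e (?act f X) \<in> bideg g one"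
    by (rule gact_bideg[OF g e fX])
  show "smul (Phitilde Phi g e f) (?act (mul e f) X) \<in> bideg g one"
    by (rule bideg_smul[OF gact_bideg[OF g grouplike_mult[OF e f] X]])
  have "smul (Phi one e f) (mul (?act e (?act f X)) (mul e f))
      = smul (Phi g e f) (mul (mul (?act e (?act f X)) e) f)"
    by (rule bideg_quasi_assoc[OF gact_bideg[OF g e fX] bideg_grouplike[OF e] bideg_grouplike[OF f]])
  then have "mul (?act e (?act f X)) (mul e f) = smul (Phi g e f) (mul (mul e (?act f X)) f)"
    by (simp add: gact_mult_right[OF g e fX] Phi_grouplike_unit_left e f)
  moreover have "smul (Phi e one f) (mul e (mul (?act f X) f)) = smul (Phi e g f) (mul (mul e (?act f X)) f)"
    by (rule bideg_quasi_assoc[OF bideg_grouplike[OF e] fX bideg_grouplike[OF f]])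
  then have "smul (Phi e g f) (mul (mul e (?act f X)) f) = smul 1 (mul e (mul f X))"
    by (simp add: gact_mult_right[OF g f X] Phi_grouplike_normal e f)
  then have "mul (mul e (?act f X)) f = smul (1 / Phi e g f) (mul e (mul f X))"
    by (rule smul_eq_smulD[OF Phi_grouplike_nonzero[OF e g f]])
  moreover have "smul (Phi e f one) (mul e (mul f X)) = smul (Phi e f g) (mul (mul e f) X)"
    by (rule bideg_quasi_assoc[OF bideg_grouplike[OF e] bideg_grouplike[OF f] X])
  then have "mul e (mul f X) = smul (Phi e f g) (mul (mul e f) X)"
    by (simp add: Phi_grouplike_unit_right e f)
  ultimately have "mul (?act e (?act f X)) (mul e f) = smul (Phitilde Phi g e f) (mul (mul e f) X)"
    by (simp add: smul_smul Phitilde_def)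
  then show "mul (?act e (?act f X)) (mul e f) = mul (smul (Phitilde Phi g e f) (?act (mul e f) X)) (mul e f)"
    by (simp add: linear_f_smul[OF mul_linear_left] gact_mult_right[OF g grouplike_mult[OF e f] X])
qed

subsection \<open>The decomposition of R\<close>

lemma grouplike_combination_zero:
  assumes "\<And>p. (\<Sum>h\<in>G. l h * h p) = 0" "g \<in> G"
  shows "l g = 0"
  by (rule grouplikes_independent[OF Del_linear eps_linear G_finite _ assms]) (simp add: G_def)

lemma grouplike_coeffs_unique:
  assumes "(\<Sum>g\<in>G. smul (l g) g) = (\<Sum>g\<in>G. smul (l' g) g)" "g \<in> G"
  shows "l g = l' g"
proof -
  have "(\<Sum>h\<in>G. (l h - l' h) * h p) = 0" for p
    using fun_cong[OF assms(1), of p] by (simp add: sum_apply left_diff_distrib sum_subtractf)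
  then show ?thesis
    using grouplike_combination_zero[OF _ assms(2), of "\<lambda>h. l h - l' h"] by simp
qed

lemma bideg_sum_eq_zero:
  assumes c: "\<forall>g\<in>G. c g \<in> bideg g one" and sum: "(\<Sum>g\<in>G. c g) = 0" and g: "g \<in> G"
  shows "c g = 0"
proof (rule ext)
  fix q
  have "(\<Sum>h\<in>G. tens2 h (c h)) = tmap P id (Del (\<Sum>h\<in>G. c h))"
    using c by (simp add: linear_f_sum[OF linear_f_comp[OF tmap_linear Del_linear]] bideg_def)
  also have "\<dots> = 0"
    by (simp add: sum linear_f_zero[OF Del_linear] linear_f_zero[OF tmap_linear])
  finally have "(\<Sum>h\<in>G. c h q * h p) = 0" for p
    by (simp add: fun_eq_iff sum_apply mult.commute)
  then show "c g q = 0 q"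
    using grouplike_combination_zero[OF _ g, of "\<lambda>h. c h q"] by simp
qed

lemma coordinates_exist: "\<exists>coord. (\<forall>g. linear_fn (coord g)) \<and> (\<forall>v. P v = (\<Sum>g\<in>G. smul (coord g v) g))"
proof -
  have "\<forall>i. \<exists>a. P (bv i) = (\<Sum>g\<in>G. smul (a g) g)"
  proof
    fix i
    have "P (bv i) \<in> lspan G"
      using P_in_Mg0 Mg0 by simp
    then obtain F a where F: "finite F" "F \<subseteq> G" "P (bv i) = (\<Sum>u\<in>F. smul (a u) u)"
      unfolding lspan_def by blast
    have "P (bv i) = (\<Sum>u\<in>G. smul (if u \<in> F then a u else 0) u)"
      unfolding F(3) by (rule sum.mono_neutral_cong_left) (use F G_finite in auto)
    then show "\<exists>a. P (bv i) = (\<Sum>g\<in>G. smul (a g) g)"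
      by (rule exI[of _ "\<lambda>u. if u \<in> F then a u else 0"])
  qed
  then obtain a where a: "\<And>i. P (bv i) = (\<Sum>g\<in>G. smul (a i g) g)"
    by metis
  let ?coord = "\<lambda>g v. \<Sum>i\<in>UNIV. v i * a i g"
  have "P v = (\<Sum>g\<in>G. smul (?coord g v) g)" for v
  proof (rule ext)
    fix p
    have "P v p = (\<Sum>i\<in>UNIV. \<Sum>g\<in>G. v i * a i g * g p)"
      by (simp add: linear_f_coords[OF P_linear, symmetric] a sum_apply sum_distrib_left mult.assoc)
    also have "\<dots> = (\<Sum>g\<in>G. smul (?coord g v) g) p"
      by (subst sum.swap) (simp add: sum_apply sum_distrib_right)
    finally show "P v p = (\<Sum>g\<in>G. smul (?coord g v) g) p" .
  qed
  moreover have "linear_fn (?coord g)" for g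
    by (simp add: linear_fn_def sum.distrib sum_distrib_left algebra_simps)
  ultimately show ?thesis
    by (intro exI[of _ ?coord]) blast
qed

definition coord :: "('b \<Rightarrow> 'k) \<Rightarrow> ('b \<Rightarrow> 'k) \<Rightarrow> 'k" where
  "coord = (SOME coord. (\<forall>g. linear_fn (coord g)) \<and> (\<forall>v. P v = (\<Sum>g\<in>G. smul (coord g v) g)))"

lemma coord_linear: "linear_fn (coord g)"
  and P_eq_sum_coord: "P v = (\<Sum>g\<in>G. smul (coord g v) g)"
  using someI_ex[OF coordinates_exist] unfolding coord_def by blast+

lemma coord_grouplike:
  assumes g: "g \<in> G" and h: "h \<in> G"
  shows "coord g h = (if g = h then 1 else 0)"
proof (rule grouplike_coeffs_unique[OF _ g])
  show "(\<Sum>g\<in>G. smul (coord g h) g) = (\<Sum>g\<in>G. smul (if g = h then 1 else 0) g)"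
    using h G_finite by (simp add: P_eq_sum_coord[symmetric] P_grouplike if_distrib[of "\<lambda>c. smul c _"]
        cong: if_cong)
qed

lemma coord_P: "g \<in> G \<Longrightarrow> coord g (P v) = coord g v"
  by (rule grouplike_coeffs_unique) (simp_all only: P_eq_sum_coord[symmetric] P_idem)

(* coord_left g (Del m) is the component m_g in (\<pi> \<otimes> id)\<Delta>m = \<Sum>_g g \<otimes> m_g. *)
definition coord_left :: "('b \<Rightarrow> 'k) \<Rightarrow> ('b \<times> 'b \<Rightarrow> 'k) \<Rightarrow> ('b \<Rightarrow> 'k)" where
  "coord_left g t = (\<lambda>j. coord g (\<lambda>i. t (i, j)))"

lemma coord_left_linear: "linear_f (coord_left g)"
  using coord_linear[of g]
  by (simp add: linear_f_def linear_fn_def coord_left_def fun_eq_iff plus_fun_def smul_def)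

lemma coord_left_tens2: "coord_left g (tens2 a b) = smul (coord g a) b"
  using linear_fn_smul[OF coord_linear, of g "b _" a]
  by (simp add: coord_left_def tens2_def fun_eq_iff smul_def mult.commute)

lemma coord_positive:
  assumes g: "g \<in> G" and z: "z \<in> Mg n" and n: "n \<noteq> 0"
  shows "coord g z = 0"
  using coord_P[OF g, of z] P_homogeneous[OF z] n linear_fn_zero[OF coord_linear] by simp

lemma P_coord_left_positive:
  assumes g: "g \<in> G" and z: "z \<in> Mg n" and n: "n \<noteq> 0"
  shows "P (coord_left g (Del z)) = 0"
proof (rule lspan_linear_eq[OF linear_f_comp[OF P_linear coord_left_linear] linear_f_zero_map
      _ Del_homogeneous[OF z]])
  fix u
  assume "u \<in> (\<Union>i\<le>n. tens_sp (Mg i) (Mg (n - i)))"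
  then obtain i where "i \<le> n" and u: "u \<in> tens_sp (Mg i) (Mg (n - i))"
    by blast
  show "P (coord_left g u) = 0"
  proof (rule lspan_linear_eq[OF linear_f_comp[OF P_linear coord_left_linear] linear_f_zero_map
        _ u[unfolded tens_sp_def]])
    fix v
    assume "v \<in> {tens2 a b |a b. a \<in> Mg i \<and> b \<in> Mg (n - i)}"
    then obtain a b where v: "v = tens2 a b" and a: "a \<in> Mg i" and b: "b \<in> Mg (n - i)"
      by blast
    have "coord g a = 0 \<or> P b = 0"
      using coord_positive[OF g a] P_homogeneous[OF b] n by (cases "i = 0") auto
    then show "P (coord_left g v) = 0"
      by (auto simp: v coord_left_tens2 linear_f_smul[OF P_linear])
  qed
qed

lemma P_coord_left:
  assumes g: "g \<in> G"
  shows "P (coord_left g (Del x)) = smul (coord g x) g"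
proof -
  have lin: "linear_f (\<lambda>x. smul (coord g x) g)"
    using coord_linear[of g] by (simp add: linear_f_def linear_fn_def smul_add_left smul_smul)
  have on_G: "P (coord_left g (Del h)) = smul (coord g h) g" if h: "h \<in> G" for h
  proof -
    have "Del h = tens2 h h"
      by (simp add: fun_eq_iff grouplike_Del[OF h])
    then show ?thesis
      using coord_grouplike[OF g h]
      by (simp add: coord_left_tens2 linear_f_smul[OF P_linear] P_grouplike[OF h])
  qed
  have degree0: "P (coord_left g (Del z)) = smul (coord g z) g" if z: "z \<in> Mg 0" for z
    using z Mg0 by (intro lspan_linear_eq[OF linear_f_comp[OF P_linear linear_f_comp[OF coord_left_linear
          Del_linear]] lin on_G]) simp_all
  show ?thesis
  proof (rule grading_linear_f_eq[OF grading linear_f_comp[OF P_linear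
        linear_f_comp[OF coord_left_linear Del_linear]] lin])
    fix n z
    assume z: "z \<in> Mg n"
    show "P (coord_left g (Del z)) = smul (coord g z) g"
    proof (cases "n = 0")
      case False
      then show ?thesis
        using P_coord_left_positive[OF g z] coord_positive[OF g z] by simp
    qed (use degree0 z in simp)
  qed
qed

lemma Del_coord_left:
  "Del (coord_left g (Del m)) (j, l) = (\<Sum>q\<in>UNIV. Del m (q, l) * coord_left g (Del (bv q)) j)"
proof -
  have coords: "coord_left g t q = (\<Sum>i\<in>UNIV. t (i, q) * coord g (bv i))" for t q
    unfolding coord_left_def by (rule linear_fn_coords[OF coord_linear, symmetric])
  have "Del (coord_left g (Del m)) (j, l) = (\<Sum>q\<in>UNIV. coord_left g (Del m) q * Del (bv q) (j, l))"
    by (rule linear_f_coords[OF Del_linear, symmetric])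
  also have "\<dots> = (\<Sum>i\<in>UNIV. coord g (bv i) * (\<Sum>q\<in>UNIV. Del m (i, q) * Del (bv q) (j, l)))"
    by (simp only: coords sum_distrib_left sum_distrib_right mult_ac) (rule sum.swap)
  also have "\<dots> = (\<Sum>i\<in>UNIV. coord g (bv i) * (\<Sum>q\<in>UNIV. Del m (q, l) * Del (bv q) (i, j)))"
    by (simp only: coassoc)
  also have "\<dots> = (\<Sum>q\<in>UNIV. Del m (q, l) * coord_left g (Del (bv q)) j)"
    by (simp only: coords sum_distrib_left mult_ac) (rule sum.swap)
  finally show ?thesis .
qed

lemma coord_left_coaction_left:
  assumes g: "g \<in> G"
  shows "tmap P id (Del (coord_left g (Del m))) (p, l) = tens2 g (coord_left g (Del m)) (p, l)"
proof -
  have "(\<lambda>j. Del (coord_left g (Del m)) (j, l))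
      = (\<Sum>q\<in>UNIV. smul (Del m (q, l)) (coord_left g (Del (bv q))))"
    by (rule ext) (simp only: Del_coord_left sum_apply smul_apply)
  then have "tmap P id (Del (coord_left g (Del m))) (p, l)
      = (\<Sum>q\<in>UNIV. Del m (q, l) * (coord g (bv q) * g p))"
    by (simp only: tmap_id_right[OF P_linear] linear_f_sum[OF P_linear] linear_f_smul[OF P_linear]
        P_coord_left[OF g] sum_apply smul_apply)
  also have "\<dots> = coord g (\<lambda>q. Del m (q, l)) * g p"
    by (simp only: mult.assoc[symmetric] sum_distrib_right[symmetric] linear_fn_coords[OF coord_linear])
  finally show ?thesis
    by (simp add: coord_left_def mult.commute)
qed

lemma coord_left_coaction_right:
  assumes m: "m \<in> Rset Del P one"
  shows "tmap id P (Del (coord_left g (Del m))) (j, r) = tens2 (coord_left g (Del m)) one (j, r)"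
proof -
  have row: "P (\<lambda>l. Del m (q, l)) = smul (m q) one" for q
  proof (rule ext)
    fix r
    have "P (\<lambda>l. Del m (q, l)) r = tmap id P (Del m) (q, r)"
      by (simp only: tmap_id_left[OF P_linear])
    then show "P (\<lambda>l. Del m (q, l)) r = smul (m q) one r"
      using m by (simp add: Rset_def)
  qed
  have "(\<lambda>l. Del (coord_left g (Del m)) (j, l))
      = (\<Sum>q\<in>UNIV. smul (coord_left g (Del (bv q)) j) (\<lambda>l. Del m (q, l)))"
    by (rule ext) (simp only: Del_coord_left sum_apply smul_apply mult.commute)
  then have "tmap id P (Del (coord_left g (Del m))) (j, r)
      = (\<Sum>q\<in>UNIV. coord_left g (Del (bv q)) j * (m q * one r))"
    by (simp only: tmap_id_left[OF P_linear] linear_f_sum[OF P_linear] linear_f_smul[OF P_linear]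
        row sum_apply smul_apply)
  also have "\<dots> = (\<Sum>q\<in>UNIV. m q * coord_left g (Del (bv q)) j) * one r"
    by (subst sum_distrib_right) (simp only: mult_ac)
  also have "\<dots> = coord_left g (Del m) j * one r"
    by (simp only: linear_f_coords[OF linear_f_comp[OF coord_left_linear Del_linear]])
  finally show ?thesis
    by simp
qed

lemma coord_left_bideg:
  "m \<in> Rset Del P one \<Longrightarrow> g \<in> G \<Longrightarrow> coord_left g (Del m) \<in> bideg g one"
  using coord_left_coaction_left coord_left_coaction_right by (simp add: bideg_def fun_eq_iff)

lemma sum_coord_left_Del: "m = (\<Sum>g\<in>G. coord_left g (Del m))"
proof (rule ext)
  fix q
  have "m q = (\<Sum>i\<in>UNIV. Del m (i, q) * eps (bv i))"
    by (rule counit_left[symmetric])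
  also have "\<dots> = eps (P (\<lambda>i. Del m (i, q)))"
    by (simp only: linear_fn_coords[OF eps_linear] eps_P[symmetric])
  also have "\<dots> = (\<Sum>g\<in>G. coord_left g (Del m)) q"
    by (simp add: P_eq_sum_coord linear_fn_sum[OF eps_linear] linear_fn_smul[OF eps_linear]
        grouplike_eps sum_apply coord_left_def)
  finally show "m q = (\<Sum>g\<in>G. coord_left g (Del m)) q" .
qed

lemma Rset_eq_lspan: "Rset Del P one = lspan (\<Union>g\<in>G. bideg g one)"
proof
  show "Rset Del P one \<subseteq> lspan (\<Union>g\<in>G. bideg g one)"
  proof
    fix m
    assume m: "m \<in> Rset Del P one"
    have "(\<Sum>g\<in>G. coord_left g (Del m)) \<in> lspan (\<Union>g\<in>G. bideg g one)"
      using coord_left_bideg[OF m] by (intro subspace_f_sum[OF lspan_subspace] lspan_base) blast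
    then show "m \<in> lspan (\<Union>g\<in>G. bideg g one)"
      by (simp only: sum_coord_left_Del[symmetric])
  qed
  have "subspace_f (Rset Del P one)"
    unfolding Rset_def
    by (rule subspace_f_equalizer[OF linear_f_comp[OF tmap_linear Del_linear] tens2_linear_left])
  moreover have "bideg g one \<subseteq> Rset Del P one" for g
    by (auto simp: bideg_def Rset_def)
  ultimately show "lspan (\<Union>g\<in>G. bideg g one) \<subseteq> Rset Del P one"
    by (intro lspan_least) auto
qed

end

theorem lemma3p1:
  fixes Del :: "('b::finite \<Rightarrow> 'k::field_char_0) \<Rightarrow> ('b \<times> 'b \<Rightarrow> 'k)"
    and eps :: "('b \<Rightarrow> 'k) \<Rightarrow> 'k"
    and mul :: "('b \<Rightarrow> 'k) \<Rightarrow> ('b \<Rightarrow> 'k) \<Rightarrow> ('b \<Rightarrow> 'k)"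
    and one :: "'b \<Rightarrow> 'k"
    and Phi Phiinv :: "('b \<Rightarrow> 'k) \<Rightarrow> ('b \<Rightarrow> 'k) \<Rightarrow> ('b \<Rightarrow> 'k) \<Rightarrow> 'k"
    and S :: "('b \<Rightarrow> 'k) \<Rightarrow> ('b \<Rightarrow> 'k)"
    and alpha beta :: "('b \<Rightarrow> 'k) \<Rightarrow> 'k"
    and Mg :: "nat \<Rightarrow> ('b \<Rightarrow> 'k) set"
    and G :: "('b \<Rightarrow> 'k) set"
  assumes alg_closed: "\<forall>p :: 'k poly. 0 < degree p \<longrightarrow> (\<exists>x. poly p x = 0)"
    and majid: "majid_algebra Del eps mul one Phi Phiinv S alpha beta"
    and pointed: "pointed Del"
    and graded: "graded_majid Del eps mul one Phi S alpha beta Mg"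
    and G_def: "G = grouplikes Del eps"
    and generated: "gen_subalg mul one (G \<union> skewprims Del eps) = UNIV"
    and G_finite: "finite G"
    and G_group: "\<forall>g\<in>G. \<forall>h\<in>G. mul g h \<in> G"
    and G_inv: "\<forall>g\<in>G. \<exists>h\<in>G. mul g h = one \<and> mul h g = one"
    and G_abelian: "\<forall>g\<in>G. \<forall>h\<in>G. mul g h = mul h g"
  shows "(\<forall>g\<in>G. \<forall>f\<in>G. \<forall>X\<in>Rg Del (gcomp Mg 0) one g.
             gact mul one Phi G g f X \<in> Rg Del (gcomp Mg 0) one g)
       \<and> (\<forall>g\<in>G. \<forall>e\<in>G. \<forall>f\<in>G. \<forall>X\<in>Rg Del (gcomp Mg 0) one g.
             gact mul one Phi G g e (gact mul one Phi G g f X)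
               = smul (Phitilde Phi g e f) (gact mul one Phi G g (mul e f) X))
       \<and> (\<forall>g\<in>G. \<forall>X\<in>Rg Del (gcomp Mg 0) one g. gact mul one Phi G g one X = X)
       \<and> Rset Del (gcomp Mg 0) one = lspan (\<Union>g\<in>G. Rg Del (gcomp Mg 0) one g)
       \<and> (\<forall>c. (\<forall>g\<in>G. c g \<in> Rg Del (gcomp Mg 0) one g) \<and> (\<Sum>g\<in>G. c g) = 0
              \<longrightarrow> (\<forall>g\<in>G. c g = 0))"
proof -
  interpret graded_majid_abelian Del eps mul one Phi Phiinv S alpha beta Mg G
    by (rule graded_majid_abelian.intro[OF majid graded G_def G_finite G_group G_inv G_abelian])
  show ?thesis
    unfolding Rg_eq_bideg
    using gact_bideg gact_comp gact_one Rset_eq_lspan bideg_sum_eq_zero by blast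
qed

end
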